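(* Assume $\mathbb{E}\{h^2(X_{i1},\dots,X_{im})\}<\infty$. Then the variance of $L_{ik}$ is $$\mathbb{V}(L_{ik})=\mathbb{V}(\mathbb{L}_{i1})+(\theta_i-\overline{\theta})^2\,\mathbb{V}(2\widehat{\theta}_i)+(\theta_i-\overline{\theta})\,\Xi^3_i,$$ where $\mathbb{L}_{i1}=\widehat{\theta_i^2}-\theta_i^2-2\theta_i(\widehat{\theta}_i-\theta_i)$.
   Context: Let $m\ge1$ be fixed, $h:E^m\to\mathbb{R}$ a symmetric kernel on a measurable space $(E,\mathcal{E})$. For $i=1,\dots,k$, $\mathbf{X}_i=\{X_{i1},\dots,X_{in_i}\}$ is a random sample of size $n_i\ge2m$ from the distribution of a random element $X_i$ of $E$, the samples independent. Let $\theta_i=\mathbb{E}\{h(X_{i1},\dots,X_{im})\}$, $\overline{\theta}=\frac1k\sum_i\theta_i$. With $n(r)=n(n-1)\cdots(n-r+1)$, $\widehat{\theta}_i=\frac{1}{n_i(m)}\sum h(X_{ij_1},\dots,X_{ij_m})$ over ordered $m$-tuples of pairwise distinct indices in $\{1,\dots,n_i\}$, and $\widehat{\theta_i^2}=\frac{1}{n_i(2m)}\sum h(X_{ij_1},\dots,X_{ij_m})h(X_{ij_{m+1}},\dots,X_{ij_{2m}})$ over ordered $2m$-tuples of pairwise distinct indices. Let $L_{ik}=\widehat{\theta_i^2}-\theta_i^2-2\overline{\theta}(\widehat{\theta}_i-\theta_i)$. For $0\le c\le m$ let $h_{c}(x_1,\dots,x_c)=\mathbb{E}\{h(X_{i1},\dots,X_{im})\mid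 X_{i1}=x_1,\dots,X_{ic}=x_c\}$ (with $h_0=\theta_i$) and $\widetilde{h}_c=h_c-\theta_i$. For $1\le c\le m$, $0\le j\le c$, let $\widetilde{\zeta}^3_{i(c,j)}=\mathrm{Cov}\{\widetilde{h}_c(X_{i1},\dots,X_{ic}),\,\widetilde{h}_j(X_{i1},\dots,X_{ij})\,\widetilde{h}_{c-j}(X_{i(j+1)},\dots,X_{ic})\}$, and $$\Xi^3_i=4\binom{n_i}{2m}^{-1}\binom{2m}{m}^{-1}\sum_{c=1}^m\binom{n_i-m}{2m-c}\binom{m}{c}\sum_{j=1}^c\binom{c}{j}\binom{2m-c}{m-j}\widetilde{\zeta}^3_{i(c,j)},$$ with the convention $\binom{a}{b}=0$ if $b>a$. *)

theory Defs
  imports "HOL-Probability.Probability"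
begin

definition ffall :: "nat \<Rightarrow> nat \<Rightarrow> nat" where
  "ffall n r = (\<Prod>l<r. n - l)"

definition dtuples :: "nat \<Rightarrow> nat \<Rightarrow> nat list set" where
  "dtuples n r = {js. length js = r \<and> distinct js \<and> set js \<subseteq> {..<n}}"

definition cov :: "'a measure \<Rightarrow> ('a \<Rightarrow> real) \<Rightarrow> ('a \<Rightarrow> real) \<Rightarrow> real" where
  "cov M U V = (\<integral>\<omega>. (U \<omega> - (\<integral>x. U x \<partial>M)) * (V \<omega> - (\<integral>x. V x \<partial>M)) \<partial>M)"

definition happ :: "nat \<Rightarrow> ((nat \<Rightarrow> 'e) \<Rightarrow> real) \<Rightarrow> (nat \<Rightarrow> 'e) \<Rightarrow> real" where
  "happ m h x = h (\<lambda>l\<in>{..<m}. x l)"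

definition symmetric_kernel :: "nat \<Rightarrow> 'e measure \<Rightarrow> ((nat \<Rightarrow> 'e) \<Rightarrow> real) \<Rightarrow> bool" where
  "symmetric_kernel m N h \<longleftrightarrow>
     (\<forall>x\<in>space (PiM {..<m} (\<lambda>_. N)). \<forall>\<sigma>. \<sigma> permutes {..<m} \<longrightarrow>
        h (\<lambda>l\<in>{..<m}. x (\<sigma> l)) = h x)"

definition theta_hat :: "nat \<Rightarrow> ((nat \<Rightarrow> 'e) \<Rightarrow> real) \<Rightarrow> nat \<Rightarrow> (nat \<Rightarrow> 'a \<Rightarrow> 'e) \<Rightarrow> 'a \<Rightarrow> real" where
  "theta_hat m h n X \<omega> =
     (\<Sum>js\<in>dtuples n m. happ m h (\<lambda>l. X (js ! l) \<omega>)) / real (ffall n m)"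

definition theta2_hat :: "nat \<Rightarrow> ((nat \<Rightarrow> 'e) \<Rightarrow> real) \<Rightarrow> nat \<Rightarrow> (nat \<Rightarrow> 'a \<Rightarrow> 'e) \<Rightarrow> 'a \<Rightarrow> real" where
  "theta2_hat m h n X \<omega> =
     (\<Sum>js\<in>dtuples n (2*m). happ m h (\<lambda>l. X (js ! l) \<omega>) * happ m h (\<lambda>l. X (js ! (m + l)) \<omega>))
       / real (ffall n (2*m))"

text \<open>h_c(x_0,...,x_{c-1}) = E h(x_0,...,x_{c-1},Y_c,...,Y_{m-1}) with Y_l iid with law D
  (the conditional expectation given the first c observations, for iid observations).\<close>
definition hcond :: "nat \<Rightarrow> 'e measure \<Rightarrow> ((nat \<Rightarrow> 'e) \<Rightarrow> real) \<Rightarrow> nat \<Rightarrow> (nat \<Rightarrow> 'e) \<Rightarrow> real" where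
  "hcond m D h c x = (\<integral>y. happ m h (\<lambda>l. if l < c then x l else y l) \<partial>(PiM {c..<m} (\<lambda>_. D)))"

text \<open>Centred version; for c = 0 it is h_0 - theta = 0 with h_0 = theta.\<close>
definition htil :: "nat \<Rightarrow> 'e measure \<Rightarrow> ((nat \<Rightarrow> 'e) \<Rightarrow> real) \<Rightarrow> real \<Rightarrow> nat \<Rightarrow> (nat \<Rightarrow> 'e) \<Rightarrow> real" where
  "htil m D h \<theta> c x = (if c = 0 then 0 else hcond m D h c x - \<theta>)"

definition zeta3 :: "'a measure \<Rightarrow> nat \<Rightarrow> 'e measure \<Rightarrow> ((nat \<Rightarrow> 'e) \<Rightarrow> real) \<Rightarrow> real
    \<Rightarrow> (nat \<Rightarrow> 'a \<Rightarrow> 'e) \<Rightarrow> nat \<Rightarrow> nat \<Rightarrow> real" where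
  "zeta3 M m D h \<theta> X c j =
     cov M (\<lambda>\<omega>. htil m D h \<theta> c (\<lambda>l. X l \<omega>))
           (\<lambda>\<omega>. htil m D h \<theta> j (\<lambda>l. X l \<omega>) * htil m D h \<theta> (c - j) (\<lambda>l. X (j + l) \<omega>))"

definition Xi3 :: "'a measure \<Rightarrow> nat \<Rightarrow> 'e measure \<Rightarrow> ((nat \<Rightarrow> 'e) \<Rightarrow> real) \<Rightarrow> real
    \<Rightarrow> (nat \<Rightarrow> 'a \<Rightarrow> 'e) \<Rightarrow> nat \<Rightarrow> real" where
  "Xi3 M m D h \<theta> X n =
     4 / (real (n choose (2*m)) * real ((2*m) choose m)) *
     (\<Sum>c=1..m. real ((n - m) choose (2*m - c)) * real (m choose c) *
        (\<Sum>j=1..c. real (c choose j) * real ((2*m - c) choose (m - j)) * zeta3 M m D h \<theta> X c j))"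

end

(*
  Write g S = h(X_S) - theta for an m-tuple S of distinct indices. Both estimators are
  averages over index tuples: theta_hat - theta is the average of g S over m-tuples, and
  L_i1 = theta2_hat - theta^2 - 2 theta (theta_hat - theta) is the average of g S1 * g S2 over
  the two halves S1, S2 of 2m-tuples. As L_ik = L_i1 + 2 (theta - theta_bar) (theta_hat - theta),
  the variance of L_ik is that of L_i1, plus (theta - theta_bar)^2 times that of 2 theta_hat,
  plus the cross term 4 (theta - theta_bar) E[L_i1 (theta_hat - theta)]. The cross term is an
  average of third moments E[g S1 * g S2 * g T]. Integrating out over the product law of the
  sample the indices of T outside S1 and S2, then those of S1 and of S2 outside T, leaves
  the centred conditional kernels of the j observations T shares with S1, of the c - j it
  shares with S2, and of all c shared ones: the moment is zeta3 (c, j). Counting the tuples T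
  with a given overlap (j, c - j) produces the binomial weights of Xi3.
*)
theory Submission
  imports Defs "HOL-Combinatorics.Multiset_Permutations"
begin

section \<open>Tuples of distinct indices\<close>

lemma ffall_Suc: "ffall k (Suc r) = ffall k r * (k - r)"
  by (simp add: ffall_def)

lemma ffall_add: "ffall n (a + b) = ffall n a * ffall (n - a) b"
  by (induction b) (simp_all add: ffall_def diff_diff_left)

lemma ffall_pos: "r \<le> n \<Longrightarrow> 0 < ffall n r"
  unfolding ffall_def by (intro prod_pos) auto

lemma ffall_mult_fact: "r \<le> n \<Longrightarrow> ffall n r * fact (n - r) = (fact n :: nat)"
proof (induction r)
  case (Suc r)
  then have "n - r = Suc (n - Suc r)" by simp
  then have "fact (n - r) = (n - r) * (fact (n - Suc r) :: nat)"
    by (simp only: fact_Suc of_nat_id)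
  with Suc show ?case by (simp add: ffall_Suc algebra_simps)
qed (simp add: ffall_def)

lemma ffall_eq_prod: "r \<le> k \<Longrightarrow> ffall k r = \<Prod>{k - r + 1..k}"
proof (induction r)
  case (Suc r)
  have "{k - Suc r + 1..k} = insert (k - r) {k - r + 1..k}"
    using Suc.prems by auto
  with Suc show ?case by (simp add: ffall_Suc mult.commute)
qed (simp add: ffall_def)

lemma card_distinct_lists_subset:
  "finite A \<Longrightarrow> k \<le> card A \<Longrightarrow>
     card {xs. length xs = k \<and> distinct xs \<and> set xs \<subseteq> A} = ffall (card A) k"
  using card_lists_distinct_length_eq[of A k] ffall_eq_prod[of k "card A"] by simp

lemma card_dtuples: "r \<le> n \<Longrightarrow> card (dtuples n r) = ffall n r"
  unfolding dtuples_def using card_distinct_lists_subset[of "{..<n}" r] by simp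

lemma finite_dtuples: "finite (dtuples n r)"
proof (rule finite_subset)
  show "dtuples n r \<subseteq> {xs. set xs \<subseteq> {..<n} \<and> length xs = r}"
    by (auto simp: dtuples_def)
qed (simp add: finite_lists_length_eq)

lemma dtuples_take_drop:
  assumes "js \<in> dtuples n (a + b)"
  shows "take a js \<in> dtuples n a" "drop a js \<in> dtuples n b"
    and "set (take a js) \<inter> set (drop a js) = {}"
  using assms set_take_subset[of a js] set_drop_subset[of a js]
    set_take_disj_set_drop_if_distinct[of js a a]
  by (auto simp: dtuples_def)

lemma dtuples_nth:
  assumes "S \<in> dtuples n r" "l < r"
  shows "S ! l < n"
proof -
  have "S ! l \<in> set S" "set S \<subseteq> {..<n}"
    using assms by (auto simp: dtuples_def)
  then show ?thesis by auto
qed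

lemma card_dtuples_take_fiber:
  assumes ks: "ks \<in> dtuples n a" and ab: "a + b \<le> n"
  shows "card {js \<in> dtuples n (a + b). take a js = ks} = ffall (n - a) b"
proof -
  let ?R = "{rs. length rs = b \<and> distinct rs \<and> set rs \<subseteq> {..<n} - set ks}"
  have ks': "distinct ks" "length ks = a" "set ks \<subseteq> {..<n}"
    using ks by (auto simp: dtuples_def)
  have "{js \<in> dtuples n (a + b). take a js = ks} = (\<lambda>rs. ks @ rs) ` ?R"
  proof (intro equalityI subsetI)
    fix js assume js: "js \<in> {js \<in> dtuples n (a + b). take a js = ks}"
    then have "js = ks @ drop a js"
      by (metis (mono_tags) append_take_drop_id mem_Collect_eq)
    moreover have "drop a js \<in> ?R"
      using js dtuples_take_drop[of js n a b] by (auto simp: dtuples_def)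
    ultimately show "js \<in> (\<lambda>rs. ks @ rs) ` ?R" by blast
  qed (use ks' in \<open>auto simp: dtuples_def\<close>)
  moreover have "card ({..<n} - set ks) = n - a"
    using ks' by (simp add: card_Diff_subset distinct_card)
  ultimately show ?thesis
    using card_distinct_lists_subset[of "{..<n} - set ks" b] ab
    by (simp add: card_image inj_on_def)
qed

lemma sum_dtuples_take:
  fixes f :: "nat list \<Rightarrow> real"
  assumes "a + b \<le> n"
  shows "(\<Sum>js\<in>dtuples n (a + b). f (take a js)) = real (ffall (n - a) b) * (\<Sum>ks\<in>dtuples n a. f ks)"
proof -
  have "(\<Sum>js\<in>dtuples n (a + b). f (take a js))
      = (\<Sum>ks\<in>dtuples n a. \<Sum>js\<in>{js \<in> dtuples n (a + b). take a js = ks}. f (take a js))"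
    using dtuples_take_drop(1)
    by (intro sum.group[symmetric] finite_dtuples) auto
  also have "\<dots> = (\<Sum>ks\<in>dtuples n a. real (ffall (n - a) b) * f ks)"
    using card_dtuples_take_fiber[OF _ assms] by (intro sum.cong) auto
  finally show ?thesis by (simp add: sum_distrib_left)
qed

lemma sum_dtuples_drop:
  fixes f :: "nat list \<Rightarrow> real"
  assumes "a + b \<le> n"
  shows "(\<Sum>js\<in>dtuples n (a + b). f (drop a js)) = real (ffall (n - b) a) * (\<Sum>ks\<in>dtuples n b. f ks)"
proof -
  have rotate: "drop a js @ take a js \<in> dtuples n (b + a)" if "js \<in> dtuples n (a + b)" for a b js
    using that dtuples_take_drop[OF that] by (auto simp: dtuples_def)
  have "(\<Sum>js\<in>dtuples n (a + b). f (drop a js)) = (\<Sum>js\<in>dtuples n (b + a). f (take b js))"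
  proof (rule sum.reindex_bij_witness[where i="\<lambda>js. drop b js @ take b js"
        and j="\<lambda>js. drop a js @ take a js"])
    fix js assume js: "js \<in> dtuples n (a + b)"
    then show "drop a js @ take a js \<in> dtuples n (b + a)" by (rule rotate)
    show "drop b (drop a js @ take a js) @ take b (drop a js @ take a js) = js"
      and "f (take b (drop a js @ take a js)) = f (drop a js)"
      using js by (auto simp: dtuples_def)
  next
    fix js assume js: "js \<in> dtuples n (b + a)"
    then show "drop b js @ take b js \<in> dtuples n (a + b)" by (rule rotate)
    show "drop a (drop b js @ take b js) @ take a (drop b js @ take b js) = js"
      using js by (auto simp: dtuples_def)
  qed
  then show ?thesis
    using sum_dtuples_take[of b a n f] assms by simp
qed

section \<open>Counting index tuples by their overlap with two disjoint sets\<close>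

lemma card_subsets_split:
  assumes fin: "finite A" "finite B" and disj: "A \<inter> B = {}"
  shows "card {T. T \<subseteq> A \<union> B \<and> card (T \<inter> A) = a \<and> P (T \<inter> B)}
       = (card A choose a) * card {U. U \<subseteq> B \<and> P U}"
proof -
  let ?F = "\<lambda>(U, V). U \<union> (V :: 'a set)"
  let ?AA = "{U. U \<subseteq> A \<and> card U = a}" and ?BB = "{U. U \<subseteq> B \<and> P U}"
  have "{T. T \<subseteq> A \<union> B \<and> card (T \<inter> A) = a \<and> P (T \<inter> B)} = ?F ` (?AA \<times> ?BB)"
  proof (intro equalityI subsetI)
    fix T assume "T \<in> {T. T \<subseteq> A \<union> B \<and> card (T \<inter> A) = a \<and> P (T \<inter> B)}"
    then have "(T \<inter> A, T \<inter> B) \<in> ?AA \<times> ?BB" "T = ?F (T \<inter> A, T \<inter> B)" by auto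
    then show "T \<in> ?F ` (?AA \<times> ?BB)" by blast
  next
    fix T assume "T \<in> ?F ` (?AA \<times> ?BB)"
    then obtain U V where "U \<subseteq> A" "card U = a" "V \<subseteq> B" "P V" "T = U \<union> V" by auto
    moreover have "(U \<union> V) \<inter> A = U" "(U \<union> V) \<inter> B = V"
      using calculation disj by auto
    ultimately show "T \<in> {T. T \<subseteq> A \<union> B \<and> card (T \<inter> A) = a \<and> P (T \<inter> B)}" by auto
  qed
  moreover have "inj_on ?F (?AA \<times> ?BB)"
  proof (rule inj_onI, clarsimp)
    fix U V U' V' assume "U \<subseteq> A" "V \<subseteq> B" "U' \<subseteq> A" "V' \<subseteq> B" "U \<union> V = U' \<union> V'"
    then have "(U \<union> V) \<inter> A = (U' \<union> V') \<inter> A" "(U \<union> V) \<inter> B = (U' \<union> V') \<inter> B" by simp_all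
    with \<open>U \<subseteq> A\<close> \<open>V \<subseteq> B\<close> \<open>U' \<subseteq> A\<close> \<open>V' \<subseteq> B\<close> disj show "U = U' \<and> V = V'" by blast
  qed
  ultimately show ?thesis
    by (simp add: card_image card_cartesian_product n_subsets[OF fin(1)])
qed

lemma card_subsets_intersection_pattern:
  assumes fin: "finite s1" "finite s2" "finite R"
    and disj: "s1 \<inter> s2 = {}" "s1 \<inter> R = {}" "s2 \<inter> R = {}"
    and "a + b \<le> c"
  shows "card {T. T \<subseteq> s1 \<union> s2 \<union> R \<and> card T = c \<and> card (T \<inter> s1) = a \<and> card (T \<inter> s2) = b}
       = (card s1 choose a) * (card s2 choose b) * (card R choose (c - a - b))"
proof -
  define Q where "Q U \<longleftrightarrow> card (U \<inter> s2) = b \<and> card (U \<inter> R) = c - a - b" for U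
  have card_T: "card T = card (T \<inter> s1) + card (T \<inter> s2) + card (T \<inter> R)"
    if "T \<subseteq> s1 \<union> s2 \<union> R" for T
  proof -
    have fin_T: "finite T"
      using that fin by (meson finite_UnI finite_subset)
    have "card T = card ((T \<inter> s1 \<union> T \<inter> s2) \<union> T \<inter> R)"
      using that by (intro arg_cong[where f=card]) auto
    also have "\<dots> = card (T \<inter> s1 \<union> T \<inter> s2) + card (T \<inter> R)"
      using fin_T disj by (intro card_Un_disjoint) auto
    also have "card (T \<inter> s1 \<union> T \<inter> s2) = card (T \<inter> s1) + card (T \<inter> s2)"
      using fin_T disj by (intro card_Un_disjoint) auto
    finally show ?thesis .
  qed
  have "{T. T \<subseteq> s1 \<union> s2 \<union> R \<and> card T = c \<and> card (T \<inter> s1) = a \<and> card (T \<inter> s2) = b}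
      = {T. T \<subseteq> s1 \<union> (s2 \<union> R) \<and> card (T \<inter> s1) = a \<and> Q (T \<inter> (s2 \<union> R))}"
  proof (rule Collect_cong)
    fix T
    have "T \<inter> (s2 \<union> R) \<inter> s2 = T \<inter> s2" "T \<inter> (s2 \<union> R) \<inter> R = T \<inter> R" by auto
    then show "(T \<subseteq> s1 \<union> s2 \<union> R \<and> card T = c \<and> card (T \<inter> s1) = a \<and> card (T \<inter> s2) = b)
        \<longleftrightarrow> (T \<subseteq> s1 \<union> (s2 \<union> R) \<and> card (T \<inter> s1) = a \<and> Q (T \<inter> (s2 \<union> R)))"
      using card_T[of T] \<open>a + b \<le> c\<close> by (auto simp: Q_def Un_assoc)
  qed
  also have "card \<dots> = (card s1 choose a) * card {U. U \<subseteq> s2 \<union> R \<and> Q U}"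
    using fin disj by (intro card_subsets_split) auto
  also have "card {U. U \<subseteq> s2 \<union> R \<and> Q U}
      = card {U. U \<subseteq> s2 \<union> R \<and> card (U \<inter> s2) = b \<and> (\<lambda>V. card V = c - a - b) (U \<inter> R)}"
    by (simp add: Q_def)
  also have "\<dots> = (card s2 choose b) * card {V. V \<subseteq> R \<and> card V = c - a - b}"
    using fin disj by (intro card_subsets_split) auto
  also have "card {V. V \<subseteq> R \<and> card V = c - a - b} = card R choose (c - a - b)"
    using fin by (simp add: n_subsets)
  finally show ?thesis by simp
qed

lemma card_dtuples_intersection_pattern:
  assumes s: "s1 \<subseteq> {..<n}" "s2 \<subseteq> {..<n}" "s1 \<inter> s2 = {}" "card s1 = m" "card s2 = m"
    and "2 * m \<le> n" and "a + b \<le> m"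
  shows "card {ks \<in> dtuples n m. card (set ks \<inter> s1) = a \<and> card (set ks \<inter> s2) = b}
       = fact m * ((m choose a) * (m choose b) * ((n - 2 * m) choose (m - a - b)))"
proof -
  define R where "R = {..<n} - (s1 \<union> s2)"
  define TT where "TT = {T. T \<subseteq> s1 \<union> s2 \<union> R \<and> card T = m \<and> card (T \<inter> s1) = a \<and> card (T \<inter> s2) = b}"
  have fin: "finite s1" "finite s2" "finite R"
    using s by (auto simp: R_def intro: finite_subset)
  have "card (s1 \<union> s2) = 2 * m"
    using s fin by (simp add: card_Un_disjoint)
  then have card_R: "card R = n - 2 * m"
    using s by (simp add: R_def card_Diff_subset fin)
  have UR: "s1 \<union> s2 \<union> R = {..<n}"
    using s by (auto simp: R_def)
  have "{ks \<in> dtuples n m. card (set ks \<inter> s1) = a \<and> card (set ks \<inter> s2) = b}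
      = (\<Union>T\<in>TT. permutations_of_set T)"
    by (auto simp: dtuples_def TT_def UR permutations_of_set_def distinct_card)
  also have "card \<dots> = (\<Sum>T\<in>TT. card (permutations_of_set T))"
  proof (rule card_UN_disjoint)
    show "finite TT"
      by (rule finite_subset[of _ "Pow {..<n}"]) (auto simp: TT_def UR)
  qed (auto dest: permutations_of_setD)
  also have "\<dots> = card TT * fact m"
    using finite_subset[of _ "{..<n}"] by (simp add: TT_def UR)
  also have "card TT = (m choose a) * (m choose b) * ((n - 2 * m) choose (m - a - b))"
    unfolding TT_def using fin s card_R assms(7)
    by (subst card_subsets_intersection_pattern) (auto simp: R_def)
  finally show ?thesis by (simp add: mult.commute)
qed

lemma sum_by_intersection_pattern:
  fixes z :: "nat \<Rightarrow> nat \<Rightarrow> real" and pa pb :: "'a \<Rightarrow> nat"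
  assumes "finite T" and le: "\<And>x. x \<in> T \<Longrightarrow> pa x + pb x \<le> m" and z0: "\<And>c. z c 0 = 0"
  shows "(\<Sum>x\<in>T. z (pa x + pb x) (pa x))
       = (\<Sum>c=1..m. \<Sum>j=1..c. real (card {x\<in>T. pa x = j \<and> pb x = c - j}) * z c j)"
proof -
  have point: "z (p + q) p = (\<Sum>c=1..m. \<Sum>j=1..c. if p = j \<and> q = c - j then z c j else 0)"
    if "p + q \<le> m" for p q
  proof -
    have inner: "(\<Sum>j=1..c. if p = j \<and> q = c - j then z c j else 0)
        = (if c = p + q \<and> 1 \<le> p then z c p else 0)" for c
    proof -
      have "(\<Sum>j=1..c. if p = j \<and> q = c - j then z c j else 0)
          = (\<Sum>j=1..c. if j = p then (if q = c - p then z c p else 0) else 0)"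
        by (rule sum.cong) auto
      then show ?thesis by auto
    qed
    have "(\<Sum>c=1..m. \<Sum>j=1..c. if p = j \<and> q = c - j then z c j else 0)
        = (\<Sum>c=1..m. if c = p + q \<and> 1 \<le> p then z c p else 0)"
      by (intro sum.cong refl) (rule inner)
    also have "\<dots> = z (p + q) p"
      using that z0 by (cases p) (auto simp: sum.delta)
    finally show ?thesis by simp
  qed
  have "(\<Sum>x\<in>T. z (pa x + pb x) (pa x))
      = (\<Sum>x\<in>T. \<Sum>c=1..m. \<Sum>j=1..c. if pa x = j \<and> pb x = c - j then z c j else 0)"
    using point le by (intro sum.cong) auto
  also have "\<dots> = (\<Sum>c=1..m. \<Sum>x\<in>T. \<Sum>j=1..c. if pa x = j \<and> pb x = c - j then z c j else 0)"
    by (rule sum.swap)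
  also have "\<dots> = (\<Sum>c=1..m. \<Sum>j=1..c. \<Sum>x\<in>T. if pa x = j \<and> pb x = c - j then z c j else 0)"
    by (intro sum.cong refl sum.swap)
  also have "\<dots> = (\<Sum>c=1..m. \<Sum>j=1..c. real (card {x\<in>T. pa x = j \<and> pb x = c - j}) * z c j)"
    using \<open>finite T\<close> by (simp add: sum.inter_filter[symmetric])
  finally show ?thesis .
qed

lemma pattern_count_div_ffall:
  assumes jc: "1 \<le> j" "j \<le> c" "c \<le> m" and mn: "2*m \<le> n"
  shows "real (fact m * (m choose j) * (m choose (c - j)) * ((n - 2*m) choose (m - c))) / real (ffall n m)
       = real ((n - m) choose (2*m - c)) * real (m choose c) * real (c choose j) * real ((2*m - c) choose (m - j))
         / (real (n choose (2*m)) * real ((2*m) choose m))"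
proof (cases "m - c \<le> n - 2*m")
  case False
  have z1: "(n - 2*m) choose (m - c) = 0" using False by simp
  have z2: "(n - m) choose (2*m - c) = 0" using False mn by simp
  show ?thesis unfolding z1 z2 by simp
next
  case True
  have ffn: "real (ffall n m) = fact n / fact (n - m)"
  proof -
    have "real (ffall n m * fact (n - m)) = real (fact n)" using ffall_mult_fact[of m n] mn by simp
    then have "real (ffall n m) * fact (n - m) = fact n" by simp
    then show ?thesis by (simp add: field_simps)
  qed
  have e1: "m - (c - j) = m + j - c" "2*m - c - (m - j) = m + j - c"
    "n - 2*m - (m - c) = n + c - 3*m" "n - m - (2*m - c) = n + c - 3*m" "2*m - m = m"
    using jc mn True by auto
  have b1: "real (m choose j) = fact m / (fact j * fact (m - j))" using jc by (intro binomial_fact) auto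
  have b2: "real (m choose (c - j)) = fact m / (fact (c - j) * fact (m + j - c))"
  proof -
    have cjm: "c - j \<le> m" using jc by arith
    show ?thesis using binomial_fact[OF cjm] e1(1) by simp
  qed
  have b3: "real ((n - 2*m) choose (m - c)) = fact (n - 2*m) / (fact (m - c) * fact (n + c - 3*m))"
    using binomial_fact[of "m - c" "n - 2*m"] True e1 by simp
  have b4: "real ((n - m) choose (2*m - c)) = fact (n - m) / (fact (2*m - c) * fact (n + c - 3*m))"
  proof -
    have le: "2*m - c \<le> n - m" using True jc mn by arith
    show ?thesis using binomial_fact[OF le] e1(4) by simp
  qed
  have b5: "real (m choose c) = fact m / (fact c * fact (m - c))" using jc by (intro binomial_fact) auto
  have b6: "real (c choose j) = fact c / (fact j * fact (c - j))" using jc by (intro binomial_fact) auto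
  have b7: "real ((2*m - c) choose (m - j)) = fact (2*m - c) / (fact (m - j) * fact (m + j - c))"
  proof -
    have le: "m - j \<le> 2*m - c" using jc by arith
    show ?thesis using binomial_fact[OF le] e1(2) by simp
  qed
  have b8: "real (n choose (2*m)) = fact n / (fact (2*m) * fact (n - 2*m))" using mn by (intro binomial_fact) auto
  have b9: "real ((2*m) choose m) = fact (2*m) / (fact m * fact m)"
    using binomial_fact[of m "2*m"] e1 by simp
  show ?thesis
    unfolding of_nat_mult b1 b2 b3 b4 b5 b6 b7 b8 b9 ffn of_nat_fact
    by (simp add: field_simps)
qed

lemma sum_dtuples_by_intersection_pattern:
  fixes z :: "nat \<Rightarrow> nat \<Rightarrow> real"
  assumes s: "s1 \<subseteq> {..<n}" "s2 \<subseteq> {..<n}" "s1 \<inter> s2 = {}" "card s1 = m" "card s2 = m"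
    and "2 * m \<le> n" and z0: "\<And>c. z c 0 = 0"
  shows "(\<Sum>ks\<in>dtuples n m. z (card (set ks \<inter> s1) + card (set ks \<inter> s2)) (card (set ks \<inter> s1)))
       = (\<Sum>c=1..m. \<Sum>j=1..c.
            real (fact m * ((m choose j) * (m choose (c - j)) * ((n - 2*m) choose (m - c)))) * z c j)"
proof -
  have le: "card (set ks \<inter> s1) + card (set ks \<inter> s2) \<le> m" if "ks \<in> dtuples n m" for ks
  proof -
    have "card (set ks \<inter> s1) + card (set ks \<inter> s2) = card (set ks \<inter> s1 \<union> set ks \<inter> s2)"
      using s(3) by (intro card_Un_disjoint[symmetric]) auto
    also have "\<dots> \<le> card (set ks)"
      by (intro card_mono) auto
    finally show ?thesis
      using that by (simp add: dtuples_def distinct_card)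
  qed
  have "(\<Sum>ks\<in>dtuples n m. z (card (set ks \<inter> s1) + card (set ks \<inter> s2)) (card (set ks \<inter> s1)))
      = (\<Sum>c=1..m. \<Sum>j=1..c.
           real (card {ks \<in> dtuples n m. card (set ks \<inter> s1) = j \<and> card (set ks \<inter> s2) = c - j}) * z c j)"
    by (rule sum_by_intersection_pattern[where pa="\<lambda>ks. card (set ks \<inter> s1)"
        and pb="\<lambda>ks. card (set ks \<inter> s2)" and z=z, OF finite_dtuples le z0])
  also have "\<dots> = (\<Sum>c=1..m. \<Sum>j=1..c.
      real (fact m * ((m choose j) * (m choose (c - j)) * ((n - 2*m) choose (m - c)))) * z c j)"
    using card_dtuples_intersection_pattern[OF s \<open>2 * m \<le> n\<close>] by (intro sum.cong refl) simp
  finally show ?thesis .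
qed

lemma average_over_intersection_patterns:
  fixes z :: "nat \<Rightarrow> nat \<Rightarrow> real"
  assumes "2 * m \<le> n" and z0: "\<And>c. z c 0 = 0"
  shows "(\<Sum>js\<in>dtuples n (2*m). \<Sum>ks\<in>dtuples n m.
            z (card (set ks \<inter> set (take m js)) + card (set ks \<inter> set (drop m js)))
              (card (set ks \<inter> set (take m js))))
           / (real (ffall n (2*m)) * real (ffall n m))
       = (\<Sum>c=1..m. real ((n - m) choose (2*m - c)) * real (m choose c) *
            (\<Sum>j=1..c. real (c choose j) * real ((2*m - c) choose (m - j)) * z c j))
           / (real (n choose (2*m)) * real ((2*m) choose m))"
proof -
  define w where "w c j = real (fact m * ((m choose j) * (m choose (c - j)) * ((n - 2*m) choose (m - c))))"
    for c j
  define B where "B c j = real ((n - m) choose (2*m - c)) * real (m choose c)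
      * real (c choose j) * real ((2*m - c) choose (m - j)) / (real (n choose (2*m)) * real ((2*m) choose m))"
    for c j
  have "set (take m js) \<subseteq> {..<n}" "set (drop m js) \<subseteq> {..<n}" "set (take m js) \<inter> set (drop m js) = {}"
    "card (set (take m js)) = m" "card (set (drop m js)) = m" if "js \<in> dtuples n (2*m)" for js
    using dtuples_take_drop[of js n m m] that by (auto simp: mult_2 dtuples_def distinct_card)
  note inner = sum_dtuples_by_intersection_pattern[where z=z, OF this assms, folded w_def]
  have "(\<Sum>js\<in>dtuples n (2*m). \<Sum>ks\<in>dtuples n m.
            z (card (set ks \<inter> set (take m js)) + card (set ks \<inter> set (drop m js)))
              (card (set ks \<inter> set (take m js))))
           / (real (ffall n (2*m)) * real (ffall n m))
      = (\<Sum>c=1..m. \<Sum>j=1..c. w c j * z c j) / real (ffall n m)"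
    using card_dtuples[of "2*m" n] ffall_pos[of "2*m" n] assms(1) by (simp add: inner)
  also have "\<dots> = (\<Sum>c=1..m. \<Sum>j=1..c. B c j * z c j)"
  proof -
    have wB: "w c j / real (ffall n m) = B c j" if "c \<in> {1..m}" "j \<in> {1..c}" for c j
      using pattern_count_div_ffall[of j c m n] that assms(1) by (simp add: w_def B_def mult.assoc)
    then show ?thesis
      unfolding sum_divide_distrib by (intro sum.cong refl) (simp add: flip: wB)
  qed
  also have "\<dots> = (\<Sum>c=1..m. real ((n - m) choose (2*m - c)) * real (m choose c) *
            (\<Sum>j=1..c. real (c choose j) * real ((2*m - c) choose (m - j)) * z c j))
           / (real (n choose (2*m)) * real ((2*m) choose m))"
    by (simp add: B_def sum_divide_distrib sum_distrib_left ac_simps)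
  finally show ?thesis .
qed

section \<open>Kernels evaluated along index tuples\<close>

definition kernel_at :: "nat \<Rightarrow> ((nat \<Rightarrow> 'e) \<Rightarrow> real) \<Rightarrow> nat list \<Rightarrow> (nat \<Rightarrow> 'e) \<Rightarrow> real" where
  "kernel_at m h S x = h (\<lambda>l\<in>{..<m}. x (S ! l))"

definition depends_only_on :: "'i set \<Rightarrow> (('i \<Rightarrow> 'e) \<Rightarrow> 'b) \<Rightarrow> bool" where
  "depends_only_on K F \<longleftrightarrow> (\<forall>x y. (\<forall>l\<in>K. x l = y l) \<longrightarrow> F x = F y)"

lemma depends_only_on_mono: "K1 \<subseteq> K2 \<Longrightarrow> depends_only_on K1 F \<Longrightarrow> depends_only_on K2 F"
  unfolding depends_only_on_def by blast

lemma depends_only_on_mult: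
  fixes F G :: "('i \<Rightarrow> 'e) \<Rightarrow> 'b::times"
  assumes "depends_only_on K F" "depends_only_on K G"
  shows "depends_only_on K (\<lambda>x. F x * G x)"
  unfolding depends_only_on_def
proof (intro allI impI)
  fix x y :: "'i \<Rightarrow> 'e" assume "\<forall>l\<in>K. x l = y l"
  then have "F x = F y" "G x = G y"
    using assms unfolding depends_only_on_def by blast+
  then show "F x * G x = F y * G y" by simp
qed

lemma happ_cong: "(\<And>l. l < m \<Longrightarrow> x l = x' l) \<Longrightarrow> happ m h x = happ m h x'"
  unfolding happ_def by (intro arg_cong[where f=h]) (auto simp: fun_eq_iff)

lemma kernel_at_cong:
  "length S = m \<Longrightarrow> (\<And>l. l \<in> set S \<Longrightarrow> x l = x' l) \<Longrightarrow> kernel_at m h S x = kernel_at m h S x'"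
  unfolding kernel_at_def by (intro arg_cong[where f=h]) (auto simp: fun_eq_iff)

lemma depends_only_on_kernel_at:
  "length S = m \<Longrightarrow> set S \<subseteq> K \<Longrightarrow> depends_only_on K (\<lambda>x. kernel_at m h S x - c)"
  unfolding depends_only_on_def using kernel_at_cong by (metis subsetD)

lemma kernel_at_restrict:
  "(\<And>l. l < m \<Longrightarrow> S ! l \<in> I) \<Longrightarrow> kernel_at m h S (restrict x I) = kernel_at m h S x"
  unfolding kernel_at_def by (intro arg_cong[where f=h]) (auto simp: fun_eq_iff)

lemma kernel_at_measurable:
  assumes "h \<in> borel_measurable (PiM {..<m} (\<lambda>_. N))" and "\<And>l. l < m \<Longrightarrow> S ! l \<in> I"
  shows "kernel_at m h S \<in> borel_measurable (PiM I (\<lambda>_. N))"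
proof -
  have "(\<lambda>x. \<lambda>l\<in>{..<m}. x (S ! l)) \<in> measurable (PiM I (\<lambda>_. N)) (PiM {..<m} (\<lambda>_. N))"
    using assms(2) by (intro measurable_restrict measurable_component_singleton) auto
  from measurable_comp[OF this assms(1)] show ?thesis
    unfolding kernel_at_def[abs_def] by (simp add: comp_def)
qed

lemma happ_prefix_measurable:
  assumes "h \<in> borel_measurable (PiM {..<m} (\<lambda>_. N))" and a: "\<And>l. l < c \<Longrightarrow> a l \<in> space N"
  shows "(\<lambda>z. happ m h (\<lambda>l. if l < c then a l else z l)) \<in> borel_measurable (PiM {c..<m} (\<lambda>_. N))"
proof -
  have "(\<lambda>z. \<lambda>l\<in>{..<m}. if l < c then a l else z l) \<in> measurable (PiM {c..<m} (\<lambda>_. N)) (PiM {..<m} (\<lambda>_. N))"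
  proof (intro measurable_restrict)
    fix l assume "l \<in> {..<m}"
    then show "(\<lambda>z. if l < c then a l else z l) \<in> measurable (PiM {c..<m} (\<lambda>_. N)) N"
      using a by (cases "l < c") (auto intro!: measurable_component_singleton)
  qed
  from measurable_comp[OF this assms(1)] show ?thesis
    unfolding happ_def by (simp add: comp_def)
qed

lemma kernel_at_permute:
  assumes "symmetric_kernel m N h"
    and S: "distinct S" "length S = m" and S': "distinct S'" "length S' = m" and "set S = set S'"
    and x: "\<And>l. l \<in> set S \<Longrightarrow> x l \<in> space N"
  shows "kernel_at m h S x = kernel_at m h S' x"
proof -
  obtain p where p: "p permutes {..<m}" "permute_list p S' = S"
  proof (rule mset_eq_permutation)
    show "mset S = mset S'"
      using S S' \<open>set S = set S'\<close> by (simp add: set_eq_iff_mset_eq_distinct)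
  qed (use S' in simp)
  define x0 where "x0 = (\<lambda>l\<in>{..<m}. x (S' ! l))"
  have "x0 \<in> space (PiM {..<m} (\<lambda>_. N))"
    using x S' \<open>set S = set S'\<close> by (auto simp: x0_def space_PiM PiE_iff)
  then have "h (\<lambda>l\<in>{..<m}. x0 (p l)) = h x0"
    using assms(1) p(1) unfolding symmetric_kernel_def by blast
  moreover have "(\<lambda>l\<in>{..<m}. x0 (p l)) = (\<lambda>l\<in>{..<m}. x (S ! l))"
    using p S' permutes_in_image[OF p(1)]
    by (auto simp: x0_def fun_eq_iff permute_list_nth[symmetric])
  ultimately show ?thesis by (simp add: kernel_at_def x0_def)
qed

lemma theta_hat_eq_average:
  "theta_hat m h n X \<omega> = (\<Sum>ks\<in>dtuples n m. kernel_at m h ks (\<lambda>l. X l \<omega>)) / real (ffall n m)"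
  by (simp add: theta_hat_def happ_def kernel_at_def)

lemma theta2_hat_eq_average:
  "theta2_hat m h n X \<omega> = (\<Sum>js\<in>dtuples n (2*m).
      kernel_at m h (take m js) (\<lambda>l. X l \<omega>) * kernel_at m h (drop m js) (\<lambda>l. X l \<omega>)) / real (ffall n (2*m))"
  unfolding theta2_hat_def
proof (intro arg_cong2[where f="(/)"] sum.cong refl)
  fix js assume "js \<in> dtuples n (2*m)"
  then have "length js = 2*m" by (simp add: dtuples_def)
  then show "happ m h (\<lambda>l. X (js ! l) \<omega>) * happ m h (\<lambda>l. X (js ! (m + l)) \<omega>)
      = kernel_at m h (take m js) (\<lambda>l. X l \<omega>) * kernel_at m h (drop m js) (\<lambda>l. X l \<omega>)"
    unfolding happ_def kernel_at_def by (intro arg_cong2[where f="(*)"] arg_cong[where f=h]) auto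
qed

lemma theta_hat_minus_eq_average:
  assumes "m \<le> n"
  shows "theta_hat m h n X \<omega> - c
       = (\<Sum>ks\<in>dtuples n m. kernel_at m h ks (\<lambda>l. X l \<omega>) - c) / real (ffall n m)"
  using assms ffall_pos[OF assms] card_dtuples[OF assms]
  by (simp add: theta_hat_eq_average sum_subtractf field_simps)

text \<open>Every m-tuple is the first half, and also the second half, of exactly
  \<open>ffall (n - m) m\<close> of the 2m-tuples, so the linear terms of the expanded product
  collapse to multiples of \<open>theta_hat\<close>.\<close>

lemma theta2_hat_linearization:
  assumes "2 * m \<le> n"
  shows "theta2_hat m h n X \<omega> - c\<^sup>2 - 2 * c * (theta_hat m h n X \<omega> - c)
       = (\<Sum>js\<in>dtuples n (2*m). (kernel_at m h (take m js) (\<lambda>l. X l \<omega>) - c)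
            * (kernel_at m h (drop m js) (\<lambda>l. X l \<omega>) - c)) / real (ffall n (2*m))"
proof -
  define H where "H ks = kernel_at m h ks (\<lambda>l. X l \<omega>)" for ks
  define P where "P = (\<Sum>js\<in>dtuples n (2*m). H (take m js) * H (drop m js))"
  define L where "L = (\<Sum>ks\<in>dtuples n m. H ks)"
  define F1 where "F1 = real (ffall n m)"
  define F where "F = real (ffall (n - m) m)"
  have F: "0 < F1" "0 < F" "real (ffall n (2*m)) = F1 * F" "real (card (dtuples n (2*m))) = F1 * F"
    using assms ffall_pos[of m n] ffall_pos[of m "n - m"] ffall_add[of n m m] card_dtuples[of "2*m" n]
    by (simp_all add: F1_def F_def mult_2)
  have take: "(\<Sum>js\<in>dtuples n (2*m). H (take m js)) = F * L"
    and drop: "(\<Sum>js\<in>dtuples n (2*m). H (drop m js)) = F * L"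
    using sum_dtuples_take[of m m n H] sum_dtuples_drop[of m m n H] assms
    by (simp_all add: mult_2 F_def L_def)
  have "(\<Sum>js\<in>dtuples n (2*m). (H (take m js) - c) * (H (drop m js) - c))
      = (\<Sum>js\<in>dtuples n (2*m). H (take m js) * H (drop m js) - c * H (take m js) - c * H (drop m js) + c\<^sup>2)"
    by (rule sum.cong) (auto simp: algebra_simps power2_eq_square)
  also have "\<dots> = P - c * (\<Sum>js\<in>dtuples n (2*m). H (take m js)) - c * (\<Sum>js\<in>dtuples n (2*m). H (drop m js))
      + real (card (dtuples n (2*m))) * c\<^sup>2"
    unfolding P_def by (simp add: sum.distrib sum_subtractf sum_distrib_left)
  finally have sum_eq: "(\<Sum>js\<in>dtuples n (2*m). (H (take m js) - c) * (H (drop m js) - c))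
      = P - 2 * c * F * L + F1 * F * c\<^sup>2"
    unfolding take drop F(4) by simp
  have "theta2_hat m h n X \<omega> - c\<^sup>2 - 2 * c * (theta_hat m h n X \<omega> - c)
      = P / (F1 * F) - c\<^sup>2 - 2 * c * (L / F1 - c)"
    unfolding theta2_hat_eq_average theta_hat_eq_average F(3) by (simp add: P_def L_def H_def F1_def)
  also have "\<dots> = (P - 2 * c * F * L + F1 * F * c\<^sup>2) / (F1 * F)"
    using F by (simp add: field_simps power2_eq_square)
  finally show ?thesis
    unfolding F(3) sum_eq[unfolded H_def, symmetric] .
qed

text \<open>Since \<open>htil\<close> vanishes at order 0, overlap patterns with nothing in common with
  the first half contribute nothing; this is why the sums in \<open>Xi3\<close> start at 1.\<close>

lemma zeta3_0: "zeta3 M m D h \<theta> X c 0 = 0"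
  by (simp add: zeta3_def cov_def htil_def)

section \<open>Square-integrable random variables\<close>

definition square_integrable :: "'a measure \<Rightarrow> ('a \<Rightarrow> real) \<Rightarrow> bool" where
  "square_integrable M f \<longleftrightarrow> f \<in> borel_measurable M \<and> integrable M (\<lambda>x. (f x)\<^sup>2)"

lemma integrable_mult_of_squares:
  fixes f g :: "'a \<Rightarrow> real"
  assumes "f \<in> borel_measurable M" "g \<in> borel_measurable M"
    and "integrable M (\<lambda>x. (f x)\<^sup>2)" "integrable M (\<lambda>x. (g x)\<^sup>2)"
  shows "integrable M (\<lambda>x. f x * g x)"
proof (rule Bochner_Integration.integrable_bound)
  show "integrable M (\<lambda>x. (f x)\<^sup>2 + (g x)\<^sup>2)"
    using assms by simp
  have "\<bar>a * b\<bar> \<le> a\<^sup>2 + b\<^sup>2" for a b :: real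
  proof -
    have "2 * (\<bar>a\<bar> * \<bar>b\<bar>) \<le> a\<^sup>2 + b\<^sup>2" "0 \<le> \<bar>a\<bar> * \<bar>b\<bar>"
      using sum_squares_bound[of "\<bar>a\<bar>" "\<bar>b\<bar>"] by (simp_all add: mult.assoc)
    then show ?thesis
      unfolding abs_mult by linarith
  qed
  then show "AE x in M. norm (f x * g x) \<le> norm ((f x)\<^sup>2 + (g x)\<^sup>2)"
    by (intro AE_I2) simp
qed (use assms in measurable)

lemma square_integrable_mult_integrable:
  "square_integrable M f \<Longrightarrow> square_integrable M g \<Longrightarrow> integrable M (\<lambda>x. f x * g x)"
  unfolding square_integrable_def by (intro integrable_mult_of_squares) auto

lemma square_integrable_add:
  assumes "square_integrable M f" "square_integrable M g"
  shows "square_integrable M (\<lambda>x. f x + g x)"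
proof -
  have "integrable M (\<lambda>x. (f x)\<^sup>2 + (g x)\<^sup>2 + 2 * (f x * g x))"
    using assms square_integrable_mult_integrable[OF assms] by (auto simp: square_integrable_def)
  then show ?thesis
    using assms by (auto simp: square_integrable_def power2_sum algebra_simps)
qed

lemma square_integrable_cmult: "square_integrable M f \<Longrightarrow> square_integrable M (\<lambda>x. c * f x)"
  unfolding square_integrable_def by (auto simp: power_mult_distrib)

lemma square_integrable_sum:
  "finite A \<Longrightarrow> (\<And>i. i \<in> A \<Longrightarrow> square_integrable M (f i))
     \<Longrightarrow> square_integrable M (\<lambda>x. \<Sum>i\<in>A. f i x)"
proof (induction A rule: finite_induct)
  case (insert i A)
  then show ?case
    using square_integrable_add[of M "f i" "\<lambda>x. \<Sum>i\<in>A. f i x"] by simp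
qed (simp add: square_integrable_def)

lemma (in finite_measure) square_integrable_integrable: "square_integrable M f \<Longrightarrow> integrable M f"
  unfolding square_integrable_def using square_integrable_imp_integrable by blast

lemma (in prob_space) variance_add_scaled_centered:
  assumes U: "square_integrable M U" and V: "square_integrable M V" and EV: "expectation V = 0"
  shows "variance (\<lambda>x. U x + a * V x)
       = variance U + a\<^sup>2 * expectation (\<lambda>x. (V x)\<^sup>2) + 2 * a * expectation (\<lambda>x. U x * V x)"
proof -
  define \<mu> where "\<mu> = expectation U"
  have int: "integrable M U" "integrable M V" "integrable M (\<lambda>x. U x * V x)"
    "integrable M (\<lambda>x. (U x)\<^sup>2)" "integrable M (\<lambda>x. (V x)\<^sup>2)"
    using U V square_integrable_mult_integrable[OF U V]
    by (simp_all add: square_integrable_integrable) (simp_all add: square_integrable_def)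
  then have int_U: "integrable M (\<lambda>x. (U x - \<mu>)\<^sup>2)"
    by (simp add: power2_diff)
  have mean: "expectation (\<lambda>x. U x + a * V x) = \<mu>"
    using int EV by (simp add: \<mu>_def)
  have "(\<lambda>x. (U x + a * V x - \<mu>)\<^sup>2)
      = (\<lambda>x. (U x - \<mu>)\<^sup>2 + a\<^sup>2 * (V x)\<^sup>2 + 2 * a * (U x * V x) - 2 * a * \<mu> * V x)"
    by (simp add: fun_eq_iff power2_eq_square algebra_simps)
  then have "variance (\<lambda>x. U x + a * V x)
      = expectation (\<lambda>x. (U x - \<mu>)\<^sup>2 + a\<^sup>2 * (V x)\<^sup>2 + 2 * a * (U x * V x) - 2 * a * \<mu> * V x)"
    unfolding mean by (rule arg_cong)
  also have "\<dots> = expectation (\<lambda>x. (U x - \<mu>)\<^sup>2) + a\<^sup>2 * expectation (\<lambda>x. (V x)\<^sup>2)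
      + 2 * a * expectation (\<lambda>x. U x * V x) - 2 * a * \<mu> * expectation V"
    using int int_U by simp
  finally show ?thesis
    using EV by (simp add: \<mu>_def)
qed

section \<open>An i.i.d. sample and its U-statistics\<close>

lemma (in prob_space) indep_vars_reindex:
  assumes indep: "indep_vars M' X I" and f: "inj_on f J" "f ` J \<subseteq> I"
  shows "indep_vars (\<lambda>j. M' (f j)) (\<lambda>j. X (f j)) J"
  unfolding indep_vars_def
proof (intro conjI ballI indep_setsI)
  let ?F = "\<lambda>i. sigma_sets (space M) {X i -` A \<inter> space M |A. A \<in> sets (M' i)}"
  have F: "indep_sets ?F I"
    using indep by (simp add: indep_vars_def)
  fix j assume "j \<in> J"
  then show "random_variable (M' (f j)) (X (f j))" and "?F (f j) \<subseteq> events"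
    using indep f F by (auto simp: indep_vars_def indep_sets_def)
next
  let ?F = "\<lambda>i. sigma_sets (space M) {X i -` A \<inter> space M |A. A \<in> sets (M' i)}"
  have F: "indep_sets ?F I"
    using indep by (simp add: indep_vars_def)
  fix A L assume L: "L \<noteq> {}" "L \<subseteq> J" "finite L" and A: "\<forall>j\<in>L. A j \<in> ?F (f j)"
  define B where "B i = A (the_inv_into L f i)" for i
  have inj_L: "inj_on f L"
    using f(1) L(2) by (rule inj_on_subset)
  have BA: "B (f j) = A j" if "j \<in> L" for j
    using the_inv_into_f_f[OF inj_L that] by (simp add: B_def)
  have "prob (\<Inter>i\<in>f ` L. B i) = (\<Prod>i\<in>f ` L. prob (B i))"
    using L f A BA by (intro indep_setsD[OF F]) auto
  then show "prob (\<Inter>j\<in>L. A j) = (\<Prod>j\<in>L. prob (A j))"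
    using BA by (simp add: prod.reindex[OF inj_L])
qed

locale iid_sample = prob_space M for M :: "'a measure" +
  fixes N :: "'e measure" and X :: "nat \<Rightarrow> 'a \<Rightarrow> 'e" and h :: "(nat \<Rightarrow> 'e) \<Rightarrow> real"
    and m n :: nat and \<theta> :: real
  assumes m_pos: "1 \<le> m" and two_m_le_n: "2 * m \<le> n"
    and h_measurable: "h \<in> borel_measurable (PiM {..<m} (\<lambda>_. N))"
    and h_symmetric: "symmetric_kernel m N h"
    and indep: "indep_vars (\<lambda>_. N) X {..<n}"
    and identically_distributed: "\<And>l. l < n \<Longrightarrow> distr M N (X l) = distr M N (X 0)"
    and kernel_square_integrable: "integrable M (\<lambda>\<omega>. (happ m h (\<lambda>l. X l \<omega>))\<^sup>2)"
    and theta_eq: "\<theta> = (\<integral>\<omega>. happ m h (\<lambda>l. X l \<omega>) \<partial>M)"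
begin

abbreviation sample :: "'a \<Rightarrow> nat \<Rightarrow> 'e" where "sample \<omega> \<equiv> \<lambda>l. X l \<omega>"
abbreviation D :: "'e measure" where "D \<equiv> distr M N (X 0)"
abbreviation PD :: "nat set \<Rightarrow> (nat \<Rightarrow> 'e) measure" where "PD I \<equiv> PiM I (\<lambda>_. D)"
abbreviation PN :: "nat set \<Rightarrow> (nat \<Rightarrow> 'e) measure" where "PN I \<equiv> PiM I (\<lambda>_. N)"

lemma X_measurable: "l < n \<Longrightarrow> X l \<in> measurable M N"
  using indep by (simp add: indep_vars_def)

lemma prob_space_D: "prob_space D"
  using X_measurable[of 0] m_pos two_m_le_n by (intro prob_space_distr) auto

lemma sets_D [measurable_cong]: "sets D = sets N"
  by simp

lemma sets_PD: "sets (PD I) = sets (PN I)"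
  by (intro sets_PiM_cong) auto

lemma measurable_PD: "measurable (PD I) K = measurable (PN I) K"
  by (rule measurable_cong_sets[OF sets_PD refl])

lemma prob_space_PD: "prob_space (PD I)"
  by (intro prob_space_PiM prob_space_D)

lemma space_PD_component: "x \<in> space (PD K) \<Longrightarrow> l \<in> K \<Longrightarrow> x l \<in> space N"
  by (auto simp: space_PiM PiE_def)

lemma integrable_const_PD [simp]: "integrable (PD Q) (\<lambda>_. c::real)"
  using prob_space_PD[of Q] by (intro finite_measure.integrable_const) (simp add: prob_space.finite_measure)

lemma measure_space_PD [simp]: "measure (PD Q) (space (PD Q)) = 1"
  by (rule prob_space.prob_space[OF prob_space_PD])

lemma product_sigma_finite_D: "product_sigma_finite (\<lambda>_. D)"
  unfolding product_sigma_finite_def using prob_space_D prob_space_imp_sigma_finite by blast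

lemma pair_sigma_finite_PD: "pair_sigma_finite (PD K) (PD Q)"
  unfolding pair_sigma_finite_def using prob_space_PD prob_space_imp_sigma_finite by blast

lemma sample_distr: "distr M (PN {..<n}) (\<lambda>\<omega>. \<lambda>l\<in>{..<n}. X l \<omega>) = PD {..<n}"
proof -
  have "{..<n} \<noteq> {}"
    using m_pos two_m_le_n by (simp add: lessThan_empty_iff)
  then have "indep_vars (\<lambda>_. N) X {..<n}
      \<longleftrightarrow> distr M (PN {..<n}) (\<lambda>\<omega>. \<lambda>l\<in>{..<n}. X l \<omega>) = PiM {..<n} (\<lambda>l. distr M N (X l))"
    by (rule indep_vars_iff_distr_eq_PiM') (simp add: X_measurable)
  then have "distr M (PN {..<n}) (\<lambda>\<omega>. \<lambda>l\<in>{..<n}. X l \<omega>) = PiM {..<n} (\<lambda>l. distr M N (X l))"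
    using indep by (rule iffD1)
  also have "\<dots> = PD {..<n}"
    by (rule PiM_cong) (auto intro: identically_distributed)
  finally show ?thesis .
qed

lemma distr_sample_reindex:
  assumes "inj_on f J" "f ` J \<subseteq> {..<n}"
  shows "distr M (PN J) (\<lambda>\<omega>. \<lambda>l\<in>J. X (f l) \<omega>) = PD J"
proof -
  have sample: "(\<lambda>\<omega>. \<lambda>l\<in>{..<n}. X l \<omega>) \<in> measurable M (PN {..<n})"
    by (intro measurable_restrict X_measurable) auto
  have select: "(\<lambda>z. \<lambda>l\<in>J. z (f l)) \<in> measurable (PN {..<n}) (PN J)"
    using assms by (intro measurable_restrict measurable_component_singleton) auto
  have "distr M (PN J) (\<lambda>\<omega>. \<lambda>l\<in>J. X (f l) \<omega>)
      = distr (distr M (PN {..<n}) (\<lambda>\<omega>. \<lambda>l\<in>{..<n}. X l \<omega>)) (PN J) (\<lambda>z. \<lambda>l\<in>J. z (f l))"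
    unfolding distr_distr[OF select sample] using assms
    by (intro distr_cong) (auto simp: comp_def restrict_def fun_eq_iff image_subset_iff)
  also have "\<dots> = distr (PD {..<n}) (PD J) (\<lambda>z. \<lambda>l\<in>J. z (f l))"
    unfolding sample_distr by (rule distr_cong) (auto simp: sets_PD)
  also have "\<dots> = PD J"
    using distr_PiM_reindex[of "{..<n}" "\<lambda>_. D" f J] assms prob_space_D by auto
  finally show ?thesis .
qed

lemma
  fixes F :: "(nat \<Rightarrow> 'e) \<Rightarrow> real"
  assumes f: "inj_on f J" "f ` J \<subseteq> {..<n}" and F: "F \<in> borel_measurable (PN J)"
  shows integral_sample_reindex: "(\<integral>\<omega>. F (\<lambda>l\<in>J. X (f l) \<omega>) \<partial>M) = integral\<^sup>L (PD J) F"
    and integrable_sample_reindex: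
      "integrable M (\<lambda>\<omega>. F (\<lambda>l\<in>J. X (f l) \<omega>)) \<longleftrightarrow> integrable (PD J) F"
proof -
  have g: "(\<lambda>\<omega>. \<lambda>l\<in>J. X (f l) \<omega>) \<in> measurable M (PN J)"
    using f by (intro measurable_restrict X_measurable) auto
  show "(\<integral>\<omega>. F (\<lambda>l\<in>J. X (f l) \<omega>) \<partial>M) = integral\<^sup>L (PD J) F"
    unfolding distr_sample_reindex[OF f, symmetric] by (rule integral_distr[OF g F, symmetric])
  show "integrable M (\<lambda>\<omega>. F (\<lambda>l\<in>J. X (f l) \<omega>)) \<longleftrightarrow> integrable (PD J) F"
    unfolding distr_sample_reindex[OF f, symmetric] by (rule integrable_distr_eq[OF g F, symmetric])
qed

lemma
  fixes F :: "(nat \<Rightarrow> 'e) \<Rightarrow> real"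
  assumes I: "I \<subseteq> {..<n}" and F: "F \<in> borel_measurable (PN I)" and dep: "depends_only_on I F"
  shows integral_sample_eq_PD: "(\<integral>\<omega>. F (sample \<omega>) \<partial>M) = integral\<^sup>L (PD I) F"
    and integrable_sample_iff_PD: "integrable M (\<lambda>\<omega>. F (sample \<omega>)) \<longleftrightarrow> integrable (PD I) F"
proof -
  have "F (\<lambda>l\<in>I. X (id l) \<omega>) = F (sample \<omega>)" for \<omega>
    using dep by (simp add: depends_only_on_def)
  then show "(\<integral>\<omega>. F (sample \<omega>) \<partial>M) = integral\<^sup>L (PD I) F"
    and "integrable M (\<lambda>\<omega>. F (sample \<omega>)) \<longleftrightarrow> integrable (PD I) F"
    using integral_sample_reindex[of id I F] integrable_sample_reindex[of id I F] I F by simp_all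
qed

lemma
  fixes F :: "real \<Rightarrow> real"
  assumes S: "S \<in> dtuples n m" and F: "F \<in> borel_measurable borel"
  shows integral_kernel_at_sample:
      "(\<integral>\<omega>. F (kernel_at m h S (sample \<omega>)) \<partial>M) = (\<integral>\<omega>. F (happ m h (sample \<omega>)) \<partial>M)"
    and integrable_kernel_at_sample:
      "integrable M (\<lambda>\<omega>. F (kernel_at m h S (sample \<omega>)))
         \<longleftrightarrow> integrable M (\<lambda>\<omega>. F (happ m h (sample \<omega>)))"
proof -
  have Fh: "(\<lambda>x. F (h x)) \<in> borel_measurable (PN {..<m})"
    using measurable_comp[OF h_measurable F] by (simp add: comp_def)
  have S_inj: "inj_on ((!) S) {..<m}" "(!) S ` {..<m} \<subseteq> {..<n}"
    using S dtuples_nth[OF S] by (auto simp: dtuples_def inj_on_def nth_eq_iff_index_eq)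
  have id_inj: "inj_on id {..<m}" "id ` {..<m} \<subseteq> {..<n}"
    using two_m_le_n by auto
  have eqs: "kernel_at m h S (sample \<omega>) = h (\<lambda>l\<in>{..<m}. X (S ! l) \<omega>)"
    "happ m h (sample \<omega>) = h (\<lambda>l\<in>{..<m}. X (id l) \<omega>)" for \<omega>
    by (simp_all add: kernel_at_def happ_def)
  show "(\<integral>\<omega>. F (kernel_at m h S (sample \<omega>)) \<partial>M) = (\<integral>\<omega>. F (happ m h (sample \<omega>)) \<partial>M)"
    unfolding eqs integral_sample_reindex[OF S_inj Fh] integral_sample_reindex[OF id_inj Fh] ..
  show "integrable M (\<lambda>\<omega>. F (kernel_at m h S (sample \<omega>)))
      \<longleftrightarrow> integrable M (\<lambda>\<omega>. F (happ m h (sample \<omega>)))"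
    unfolding eqs integrable_sample_reindex[OF S_inj Fh] integrable_sample_reindex[OF id_inj Fh] ..
qed

lemma happ_measurable: "(\<lambda>\<omega>. happ m h (sample \<omega>)) \<in> borel_measurable M"
proof -
  have "(\<lambda>\<omega>. \<lambda>l\<in>{..<m}. X l \<omega>) \<in> measurable M (PN {..<m})"
    using two_m_le_n by (intro measurable_restrict X_measurable) auto
  from measurable_comp[OF this h_measurable] show ?thesis
    by (simp add: happ_def comp_def)
qed

definition centered :: "nat list \<Rightarrow> (nat \<Rightarrow> 'e) \<Rightarrow> real" where
  "centered S x = kernel_at m h S x - \<theta>"

lemma centered_measurable: "(\<And>l. l < m \<Longrightarrow> S ! l \<in> I) \<Longrightarrow> centered S \<in> borel_measurable (PN I)"
  unfolding centered_def[abs_def] using kernel_at_measurable[OF h_measurable] by measurable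

lemma depends_only_on_centered: "length S = m \<Longrightarrow> set S \<subseteq> K \<Longrightarrow> depends_only_on K (centered S)"
  unfolding centered_def[abs_def] by (rule depends_only_on_kernel_at)

context
  fixes S assumes S: "S \<in> dtuples n m"
begin

lemma integrable_kernel_at: "integrable M (\<lambda>\<omega>. kernel_at m h S (sample \<omega>))"
  using integrable_kernel_at_sample[OF S, of "\<lambda>x. x"]
    square_integrable_imp_integrable[OF happ_measurable kernel_square_integrable] by simp

lemma integrable_kernel_at_square: "integrable M (\<lambda>\<omega>. (kernel_at m h S (sample \<omega>))\<^sup>2)"
  using integrable_kernel_at_sample[OF S, of "\<lambda>x. x\<^sup>2"] kernel_square_integrable by simp

lemma centered_sample_measurable: "(\<lambda>\<omega>. centered S (sample \<omega>)) \<in> borel_measurable M"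
  unfolding centered_def using integrable_kernel_at by measurable

lemma integral_centered: "(\<integral>\<omega>. centered S (sample \<omega>) \<partial>M) = 0"
proof -
  have "(\<integral>\<omega>. centered S (sample \<omega>) \<partial>M) = (\<integral>\<omega>. kernel_at m h S (sample \<omega>) \<partial>M) - \<theta>"
    using integrable_kernel_at prob_space by (simp add: centered_def)
  also have "\<dots> = 0"
    using integral_kernel_at_sample[OF S, of "\<lambda>x. x"] theta_eq by simp
  finally show ?thesis .
qed

lemma integrable_centered_square: "integrable M (\<lambda>\<omega>. (centered S (sample \<omega>))\<^sup>2)"
  using integrable_kernel_at_square integrable_kernel_at
  by (simp add: centered_def power2_diff)

lemma integrable_kernel_at_PD:
  assumes "set S \<subseteq> I" "I \<subseteq> {..<n}"
  shows "integrable (PD I) (kernel_at m h S)"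
proof -
  have nth: "\<And>l. l < m \<Longrightarrow> S ! l \<in> I"
    using S assms(1) by (auto simp: dtuples_def)
  have "integrable M (\<lambda>\<omega>. kernel_at m h S (\<lambda>l\<in>I. X (id l) \<omega>))"
    using integrable_kernel_at by (simp add: kernel_at_restrict nth)
  then show ?thesis
    using integrable_sample_reindex[of id I "kernel_at m h S"] assms(2)
      kernel_at_measurable[OF h_measurable nth] by simp
qed

end

lemma integrable_centered_product_square:
  assumes S1: "S1 \<in> dtuples n m" and S2: "S2 \<in> dtuples n m" and disj: "set S1 \<inter> set S2 = {}"
  shows "integrable M (\<lambda>\<omega>. (centered S1 (sample \<omega>) * centered S2 (sample \<omega>))\<^sup>2)"
proof -
  define Y where "Y S z = (centered S z)\<^sup>2" for S z
  have nth: "\<And>l. l < m \<Longrightarrow> S1 ! l \<in> set S1" "\<And>l. l < m \<Longrightarrow> S2 ! l \<in> set S2"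
    using S1 S2 by (auto simp: dtuples_def)
  have iv: "indep_var (PN (set S1)) (\<lambda>\<omega>. restrict (sample \<omega>) (set S1))
      (PN (set S2)) (\<lambda>\<omega>. restrict (sample \<omega>) (set S2))"
    using S1 S2 disj by (intro indep_var_restrict[OF indep]) (auto simp: dtuples_def)
  have "Y S1 \<in> borel_measurable (PN (set S1))" "Y S2 \<in> borel_measurable (PN (set S2))"
    unfolding Y_def using centered_measurable[OF nth(1)] centered_measurable[OF nth(2)] by measurable
  from indep_var_compose[OF iv this]
  have "indep_var borel (\<lambda>\<omega>. Y S1 (restrict (sample \<omega>) (set S1)))
      borel (\<lambda>\<omega>. Y S2 (restrict (sample \<omega>) (set S2)))"
    by (simp add: comp_def)
  moreover have "Y S (restrict (sample \<omega>) (set S)) = (centered S (sample \<omega>))\<^sup>2"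
    if "S \<in> {S1, S2}" for S \<omega>
    using that nth by (auto simp: Y_def centered_def kernel_at_restrict)
  ultimately show ?thesis
    using indep_var_integrable integrable_centered_square[OF S1] integrable_centered_square[OF S2]
    by (simp add: power_mult_distrib)
qed

lemma integrable_centered_triple:
  assumes "S1 \<in> dtuples n m" "S2 \<in> dtuples n m" "T \<in> dtuples n m" "set S1 \<inter> set S2 = {}"
  shows "integrable M (\<lambda>\<omega>. centered S1 (sample \<omega>) * centered S2 (sample \<omega>) * centered T (sample \<omega>))"
  using assms centered_sample_measurable integrable_centered_product_square integrable_centered_square
  by (intro integrable_mult_of_squares) auto

lemma square_integrable_centered:
  "S \<in> dtuples n m \<Longrightarrow> square_integrable M (\<lambda>\<omega>. centered S (sample \<omega>))"
  using centered_sample_measurable integrable_centered_square by (simp add: square_integrable_def)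

lemma square_integrable_centered_product:
  assumes "S1 \<in> dtuples n m" "S2 \<in> dtuples n m" "set S1 \<inter> set S2 = {}"
  shows "square_integrable M (\<lambda>\<omega>. centered S1 (sample \<omega>) * centered S2 (sample \<omega>))"
  using assms centered_sample_measurable integrable_centered_product_square
  by (simp add: square_integrable_def)

subsection \<open>Integrating out coordinates\<close>

lemma integrable_merge:
  fixes F :: "(nat \<Rightarrow> 'e) \<Rightarrow> real"
  assumes "finite K" "finite Q" "K \<inter> Q = {}" and "integrable (PD (K \<union> Q)) F"
  shows "integrable (PD K \<Otimes>\<^sub>M PD Q) (\<lambda>p. F (merge K Q p))"
  by (rule integrable_distr[OF measurable_merge])
    (simp add: product_sigma_finite.distr_merge[OF product_sigma_finite_D assms(3,1,2)] assms(4))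

text \<open>For an i.i.d. sample this is the conditional expectation of the centred kernel
  given the observations indexed by \<open>K\<close>.\<close>

definition partial_mean :: "nat set \<Rightarrow> nat set \<Rightarrow> nat list \<Rightarrow> (nat \<Rightarrow> 'e) \<Rightarrow> real" where
  "partial_mean K Q S x = (\<integral>y. centered S (merge K Q (x, y)) \<partial>PD Q)"

lemma
  assumes KQ: "finite K" "finite Q" "K \<inter> Q = {}" and R: "depends_only_on K R"
    and int: "integrable (PD (K \<union> Q)) (\<lambda>z. centered S z * R z)"
  shows integrable_integrate_out: "integrable (PD K) (\<lambda>x. partial_mean K Q S x * R x)"
    and integral_integrate_out:
      "(\<integral>z. centered S z * R z \<partial>PD (K \<union> Q)) = (\<integral>x. partial_mean K Q S x * R x \<partial>PD K)"
proof -
  have "R (merge K Q (x, y)) = R x" for x y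
    using R by (simp add: depends_only_on_def merge_def)
  then have inner: "(\<integral>y. centered S (merge K Q (x, y)) * R (merge K Q (x, y)) \<partial>PD Q)
      = partial_mean K Q S x * R x" for x
    by (simp add: partial_mean_def)
  show "integrable (PD K) (\<lambda>x. partial_mean K Q S x * R x)"
    using pair_sigma_finite.integrable_fst'[OF pair_sigma_finite_PD integrable_merge[OF KQ int]]
    by (simp add: inner)
  show "(\<integral>z. centered S z * R z \<partial>PD (K \<union> Q)) = (\<integral>x. partial_mean K Q S x * R x \<partial>PD K)"
    using product_sigma_finite.product_integral_fold[OF product_sigma_finite_D KQ(3,1,2) int]
    by (simp add: inner)
qed

lemma partial_mean_cong:
  assumes "length S = m" "set S \<inter> K = set S \<inter> K'" "K \<inter> Q = {}" "K' \<inter> Q = {}"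
  shows "partial_mean K Q S x = partial_mean K' Q S x"
proof -
  have "centered S (merge K Q (x, y)) = centered S (merge K' Q (x, y))" for y
    unfolding centered_def using assms by (intro arg_cong2[where f="(-)"] kernel_at_cong) (auto simp: merge_def)
  then show ?thesis by (simp add: partial_mean_def)
qed

lemma depends_only_on_partial_mean:
  assumes "length S = m" "K \<inter> Q = {}"
  shows "depends_only_on (set S \<inter> K) (partial_mean K Q S)"
  unfolding depends_only_on_def
proof (intro allI impI)
  fix x y :: "nat \<Rightarrow> 'e" assume "\<forall>l\<in>set S \<inter> K. x l = y l"
  then have "centered S (merge K Q (x, z)) = centered S (merge K Q (y, z))" for z
    unfolding centered_def using assms
    by (intro arg_cong2[where f="(-)"] kernel_at_cong) (auto simp: merge_def)
  then show "partial_mean K Q S x = partial_mean K Q S y"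
    by (simp add: partial_mean_def)
qed

lemma hcond_0: "hcond m D h 0 x = \<theta>"
proof -
  have "hcond m D h 0 x = (\<integral>z. h z \<partial>PD {..<m})"
    unfolding hcond_def happ_def atLeast0LessThan
  proof (rule Bochner_Integration.integral_cong[OF refl])
    fix y assume "y \<in> space (PD {..<m})"
    then have "(\<lambda>l\<in>{..<m}. if l < 0 then x l else y l) = y"
      by (auto simp: space_PiM PiE_def extensional_def fun_eq_iff)
    then show "h (\<lambda>l\<in>{..<m}. if l < 0 then x l else y l) = h y" by simp
  qed
  also have "\<dots> = (\<integral>\<omega>. h (\<lambda>l\<in>{..<m}. X (id l) \<omega>) \<partial>M)"
    using two_m_le_n by (intro integral_sample_reindex[symmetric] h_measurable) auto
  also have "\<dots> = \<theta>"
    by (simp add: theta_eq happ_def)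
  finally show ?thesis .
qed

lemma htil_eq_hcond: "htil m D h \<theta> c x = hcond m D h c x - \<theta>"
  unfolding htil_def using hcond_0[of x] by auto

lemma hcond_cong: "(\<And>l. l < c \<Longrightarrow> x l = x' l) \<Longrightarrow> hcond m D h c x = hcond m D h c x'"
  unfolding hcond_def happ_def
  by (intro arg_cong[where f="\<lambda>F. integral\<^sup>L _ F"] ext arg_cong[where f=h]) (auto simp: fun_eq_iff)

lemma htil_cong: "(\<And>l. l < c \<Longrightarrow> x l = x' l) \<Longrightarrow> htil m D h \<theta> c x = htil m D h \<theta> c x'"
  unfolding htil_def using hcond_cong by metis

lemma htil_measurable:
  assumes f: "\<And>l. l < c \<Longrightarrow> f l \<in> J" and "c \<le> m"
  shows "(\<lambda>x. htil m D h \<theta> c (\<lambda>l. x (f l))) \<in> borel_measurable (PN J)"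
proof -
  interpret Q: prob_space "PD {c..<m}" by (rule prob_space_PD)
  have "(\<lambda>p. \<lambda>l\<in>{..<m}. if l < c then fst p (f l) else snd p l)
      \<in> measurable (PN J \<Otimes>\<^sub>M PD {c..<m}) (PN {..<m})"
  proof (intro measurable_restrict)
    fix l assume l: "l \<in> {..<m}"
    show "(\<lambda>p. if l < c then fst p (f l) else snd p l) \<in> measurable (PN J \<Otimes>\<^sub>M PD {c..<m}) N"
    proof (cases "l < c")
      case True
      then show ?thesis
        using f[OF True] by (simp add: measurable_compose[OF measurable_fst measurable_component_singleton])
    next
      case False
      then have "(\<lambda>p. snd p l) \<in> measurable (PN J \<Otimes>\<^sub>M PD {c..<m}) D"
        using l by (intro measurable_compose[OF measurable_snd measurable_component_singleton]) auto
      then show ?thesis using False by (simp add: measurable_cong_sets[OF refl sets_D])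
    qed
  qed
  from measurable_comp[OF this h_measurable]
  have "(\<lambda>x. hcond m D h c (\<lambda>l. x (f l))) \<in> borel_measurable (PN J)"
    unfolding hcond_def happ_def by (intro Q.borel_measurable_lebesgue_integral) (simp add: comp_def case_prod_beta)
  then show ?thesis
    unfolding htil_def by measurable
qed

lemma kernel_at_merge_reorder:
  assumes S: "distinct S" "length S = m" and KQ: "K \<inter> Q = {}" "Q = set S - K"
    and as: "distinct as" "set as = set S \<inter> K" and qs: "distinct qs" "set qs = Q"
    and x: "\<And>l. l \<in> set S \<inter> K \<Longrightarrow> x l \<in> space N" and y: "\<And>l. l \<in> Q \<Longrightarrow> y l \<in> space N"
  shows "kernel_at m h S (merge K Q (x, y))
       = happ m h (\<lambda>l. if l < length as then x (as ! l) else y (qs ! (l - length as)))"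
proof -
  have S': "distinct (as @ qs)" "set (as @ qs) = set S"
    using as qs KQ by auto
  then have "length (as @ qs) = m"
    using S by (metis distinct_card)
  then have "kernel_at m h S (merge K Q (x, y)) = kernel_at m h (as @ qs) (merge K Q (x, y))"
    using x y KQ S' by (intro kernel_at_permute[OF h_symmetric S]) (auto simp: merge_def)
  also have "\<dots> = happ m h (\<lambda>l. if l < length as then x (as ! l) else y (qs ! (l - length as)))"
    unfolding kernel_at_def happ_def
  proof (intro arg_cong[where f=h] restrict_ext)
    fix l assume "l \<in> {..<m}"
    show "merge K Q (x, y) ((as @ qs) ! l)
        = (if l < length as then x (as ! l) else y (qs ! (l - length as)))"
    proof (cases "l < length as")
      case True
      then have "as ! l \<in> K"
        using as nth_mem[of l as] by blast
      with True show ?thesis by (simp add: nth_append merge_def)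
    next
      case False
      then have "qs ! (l - length as) \<in> Q"
        using qs \<open>l \<in> {..<m}\<close> \<open>length (as @ qs) = m\<close> nth_mem[of "l - length as" qs] by auto
      with False KQ(1) show ?thesis by (auto simp: nth_append merge_def)
    qed
  qed
  finally show ?thesis .
qed

lemma integral_kernel_at_merge:
  assumes S: "distinct S" "length S = m" and KQ: "K \<inter> Q = {}" "Q = set S - K"
    and as: "distinct as" "set as = set S \<inter> K"
    and x: "\<And>l. l \<in> set S \<inter> K \<Longrightarrow> x l \<in> space N"
  shows "(\<integral>y. kernel_at m h S (merge K Q (x, y)) \<partial>PD Q) = hcond m D h (length as) (\<lambda>l. x (as ! l))"
proof -
  define c where "c = length as"
  define qs where "qs = sorted_list_of_set Q"
  have qs: "distinct qs" "set qs = Q"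
    using KQ(2) by (simp_all add: qs_def)
  have "length as + length qs = m"
    using S as qs KQ card_Int_Diff[of "set S" K] by (simp add: distinct_card[symmetric])
  then have len_qs: "length qs = m - c"
    by (simp add: c_def)
  define Fz where "Fz z = happ m h (\<lambda>l. if l < c then x (as ! l) else z l)" for z
  define r where "r y = (\<lambda>l\<in>{c..<m}. y (qs ! (l - c)))" for y :: "nat \<Rightarrow> 'e"
  have r_inj: "inj_on (\<lambda>l. qs ! (l - c)) {c..<m}" "(\<lambda>l. qs ! (l - c)) \<in> {c..<m} \<rightarrow> Q"
    using qs len_qs by (auto simp: inj_on_def nth_eq_iff_index_eq)
  have r_measurable: "r \<in> measurable (PD Q) (PD {c..<m})"
    unfolding r_def using r_inj(2) by (intro measurable_restrict measurable_component_singleton) auto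
  have r_distr: "distr (PD Q) (PD {c..<m}) r = PD {c..<m}"
    unfolding r_def using distr_PiM_reindex[of Q "\<lambda>_. D" _ "{c..<m}"] r_inj prob_space_D by simp
  have "x (as ! l) \<in> space N" if "l < c" for l
    using x as nth_mem[of l as] that by (auto simp: c_def)
  from happ_prefix_measurable[OF h_measurable this]
  have Fz_measurable: "Fz \<in> borel_measurable (PD {c..<m})"
    unfolding Fz_def measurable_PD .
  have "kernel_at m h S (merge K Q (x, y)) = Fz (r y)" if "y \<in> space (PD Q)" for y
  proof -
    have "kernel_at m h S (merge K Q (x, y))
        = happ m h (\<lambda>l. if l < length as then x (as ! l) else y (qs ! (l - length as)))"
      by (rule kernel_at_merge_reorder[OF S KQ as qs x space_PD_component[OF that]])
    also have "\<dots> = Fz (r y)"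
      unfolding Fz_def r_def c_def by (intro happ_cong) simp
    finally show ?thesis .
  qed
  then have "(\<integral>y. kernel_at m h S (merge K Q (x, y)) \<partial>PD Q) = (\<integral>y. Fz (r y) \<partial>PD Q)"
    by (intro Bochner_Integration.integral_cong) auto
  also have "\<dots> = (\<integral>z. Fz z \<partial>PD {c..<m})"
    using integral_distr[OF r_measurable Fz_measurable] r_distr by simp
  also have "\<dots> = hcond m D h (length as) (\<lambda>l. x (as ! l))"
    by (simp add: hcond_def Fz_def c_def)
  finally show ?thesis .
qed

lemma partial_mean_eq_htil:
  assumes S: "distinct S" "length S = m" and KQ: "K \<inter> Q = {}" "Q = set S - K"
    and as: "distinct as" "set as = set S \<inter> K"
    and x: "\<And>l. l \<in> set S \<inter> K \<Longrightarrow> x l \<in> space N"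
    and int: "integrable (PD Q) (\<lambda>y. kernel_at m h S (merge K Q (x, y)))"
  shows "partial_mean K Q S x = htil m D h \<theta> (length as) (\<lambda>l. x (as ! l))"
proof -
  have "partial_mean K Q S x = (\<integral>y. kernel_at m h S (merge K Q (x, y)) \<partial>PD Q) - \<theta>"
    using Bochner_Integration.integral_diff[OF int integrable_const_PD[of Q \<theta>]]
    by (simp add: partial_mean_def centered_def)
  then show ?thesis
    by (simp only: integral_kernel_at_merge[OF S KQ as x] htil_eq_hcond)
qed

lemma AE_integrable_kernel_at_merge:
  assumes S: "S \<in> dtuples n m" and K: "finite K" "K \<subseteq> {..<n}" and Q: "Q = set S - K"
  shows "AE x in PD K. integrable (PD Q) (\<lambda>y. kernel_at m h S (merge K Q (x, y)))"
proof -
  have "integrable (PD (K \<union> Q)) (kernel_at m h S)"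
    using S K Q by (intro integrable_kernel_at_PD) (auto simp: dtuples_def)
  from integrable_merge[OF K(1) _ _ this] Q
  show ?thesis
    by (intro pair_sigma_finite.AE_integrable_fst'[OF pair_sigma_finite_PD]) auto
qed

lemma partial_mean_AE_eq_htil:
  assumes S: "S \<in> dtuples n m" and K: "finite K" "K \<subseteq> {..<n}" and Q: "Q = set S - K"
    and as: "distinct as" "set as = set S \<inter> K"
  shows "AE x in PD K. partial_mean K Q S x = htil m D h \<theta> (length as) (\<lambda>l. x (as ! l))"
  using AE_integrable_kernel_at_merge[OF S K Q] AE_space
proof eventually_elim
  case (elim x)
  then show ?case
    using S Q as by (intro partial_mean_eq_htil) (auto simp: dtuples_def space_PD_component)
qed

lemma depends_only_on_htil: "depends_only_on {..<c} (htil m D h \<theta> c)"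
  unfolding depends_only_on_def using htil_cong by blast

lemma partial_mean_AE_eq_htil_prefix:
  assumes "c \<le> m"
  shows "AE x in PD {..<c}. partial_mean {..<c} {c..<m} [0..<m] x = htil m D h \<theta> c x"
proof -
  have "[0..<m] \<in> dtuples n m" "{..<c} \<subseteq> {..<n}" "{c..<m} = set [0..<m] - {..<c}"
    "distinct [0..<c]" "set [0..<c] = set [0..<m] \<inter> {..<c}"
    using assms two_m_le_n by (auto simp: dtuples_def)
  from partial_mean_AE_eq_htil[OF this(1) finite_lessThan this(2-5)]
  show ?thesis
  proof eventually_elim
    case (elim x)
    moreover have "htil m D h \<theta> c (\<lambda>l. x ([0..<c] ! l)) = htil m D h \<theta> c x"
      by (rule htil_cong) simp
    ultimately show ?case by simp
  qed
qed

lemma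
  assumes "c \<le> m"
  shows integrable_htil: "integrable M (\<lambda>\<omega>. htil m D h \<theta> c (sample \<omega>))"
    and integral_htil: "(\<integral>\<omega>. htil m D h \<theta> c (sample \<omega>) \<partial>M) = 0"
proof -
  define S where "S = [0..<m]"
  have S: "S \<in> dtuples n m" and sub: "{..<m} \<subseteq> {..<n}" "{..<c} \<subseteq> {..<n}"
    using assms two_m_le_n by (auto simp: S_def dtuples_def)
  have KQ: "{..<c} \<inter> {c..<m} = {}" "{..<c} \<union> {c..<m} = {..<m}"
    using assms by auto
  have "centered S \<in> borel_measurable (PN {..<m})" "depends_only_on {..<m} (centered S)"
    using S by (auto simp: dtuples_def S_def intro: centered_measurable depends_only_on_centered)
  note full = integral_sample_eq_PD[OF sub(1) this] integrable_sample_iff_PD[OF sub(1) this]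
  have int: "integrable (PD ({..<c} \<union> {c..<m})) (\<lambda>z. centered S z * 1)"
    using full(2) KQ(2) square_integrable_centered[OF S, THEN square_integrable_integrable] by simp
  have one: "depends_only_on {..<c} (\<lambda>_. 1 :: real)"
    by (simp add: depends_only_on_def)
  have pm: "integrable (PD {..<c}) (partial_mean {..<c} {c..<m} S)"
    "(\<integral>x. partial_mean {..<c} {c..<m} S x \<partial>PD {..<c}) = 0"
    using integrable_integrate_out[OF _ _ KQ(1) one int] integral_integrate_out[OF _ _ KQ(1) one int]
      full(1) integral_centered[OF S] KQ(2) by simp_all
  note ae = partial_mean_AE_eq_htil_prefix[OF assms, folded S_def]
  have "(\<lambda>x. htil m D h \<theta> c (\<lambda>l. x (id l))) \<in> borel_measurable (PN {..<c})"
    using assms by (intro htil_measurable) auto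
  then have htil_c: "htil m D h \<theta> c \<in> borel_measurable (PN {..<c})"
    by simp
  then have "htil m D h \<theta> c \<in> borel_measurable (PD {..<c})"
    by (simp only: measurable_PD)
  note htil_PD = integrable_cong_AE_imp[OF pm(1) this ae]
    integral_cong_AE[OF borel_measurable_integrable[OF pm(1)] this ae]
  show "integrable M (\<lambda>\<omega>. htil m D h \<theta> c (sample \<omega>))"
    using integrable_sample_iff_PD[OF sub(2) htil_c depends_only_on_htil] htil_PD(1) by simp
  show "(\<integral>\<omega>. htil m D h \<theta> c (sample \<omega>) \<partial>M) = 0"
    using integral_sample_eq_PD[OF sub(2) htil_c depends_only_on_htil] htil_PD(2) pm(2) by simp
qed

subsection \<open>Third moments of the centred kernel\<close>

definition zeta3_integrand :: "nat \<Rightarrow> nat \<Rightarrow> (nat \<Rightarrow> 'e) \<Rightarrow> real" where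
  "zeta3_integrand j c y
     = htil m D h \<theta> c y * (htil m D h \<theta> j y * htil m D h \<theta> (c - j) (\<lambda>l. y (j + l)))"

lemma zeta3_integrand_cong:
  "j \<le> c \<Longrightarrow> (\<And>l. l < c \<Longrightarrow> y l = y' l) \<Longrightarrow> zeta3_integrand j c y = zeta3_integrand j c y'"
  unfolding zeta3_integrand_def by (intro arg_cong2[where f="(*)"] htil_cong) auto

lemma zeta3_integrand_measurable:
  assumes "j \<le> c" "c \<le> m" and f: "\<And>l. l < c \<Longrightarrow> f l \<in> J"
  shows "(\<lambda>x. zeta3_integrand j c (\<lambda>l. x (f l))) \<in> borel_measurable (PN J)"
proof -
  have "(\<lambda>x. htil m D h \<theta> c (\<lambda>l. x (f l))) \<in> borel_measurable (PN J)"
    "(\<lambda>x. htil m D h \<theta> j (\<lambda>l. x (f l))) \<in> borel_measurable (PN J)"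
    "(\<lambda>x. htil m D h \<theta> (c - j) (\<lambda>l. x (f (j + l)))) \<in> borel_measurable (PN J)"
    using assms by (intro htil_measurable; auto)+
  then show ?thesis
    unfolding zeta3_integrand_def by measurable
qed

lemma zeta3_eq_integral:
  assumes "c \<le> m" and int: "integrable M (\<lambda>\<omega>. zeta3_integrand j c (sample \<omega>))"
  shows "zeta3 M m D h \<theta> X c j = (\<integral>\<omega>. zeta3_integrand j c (sample \<omega>) \<partial>M)"
proof -
  define U where "U \<omega> = htil m D h \<theta> c (sample \<omega>)" for \<omega>
  define V where "V \<omega> = htil m D h \<theta> j (sample \<omega>) * htil m D h \<theta> (c - j) (\<lambda>l. X (j + l) \<omega>)" for \<omega>
  have U: "integrable M U" "(\<integral>\<omega>. U \<omega> \<partial>M) = 0"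
    using integrable_htil[OF assms(1)] integral_htil[OF assms(1)] by (simp_all add: U_def[abs_def])
  have UV: "U \<omega> * V \<omega> = zeta3_integrand j c (sample \<omega>)" for \<omega>
    by (simp add: U_def V_def zeta3_integrand_def)
  have "zeta3 M m D h \<theta> X c j = (\<integral>\<omega>. U \<omega> * V \<omega> - (\<integral>\<omega>. V \<omega> \<partial>M) * U \<omega> \<partial>M)"
    unfolding zeta3_def cov_def U_def[symmetric] V_def[symmetric] U(2) by (simp add: algebra_simps)
  also have "\<dots> = (\<integral>\<omega>. zeta3_integrand j c (sample \<omega>) \<partial>M)"
    using int U by (simp add: UV)
  finally show ?thesis .
qed

lemma
  assumes cs: "distinct cs" "set cs \<subseteq> K" "length cs = c" and "j \<le> c" "c \<le> m" and K: "K \<subseteq> {..<n}"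
  shows integral_zeta3_integrand_reindex:
      "(\<integral>x. zeta3_integrand j c (\<lambda>l. x (cs ! l)) \<partial>PD K) = (\<integral>\<omega>. zeta3_integrand j c (sample \<omega>) \<partial>M)"
    and integrable_zeta3_integrand_reindex:
      "integrable (PD K) (\<lambda>x. zeta3_integrand j c (\<lambda>l. x (cs ! l)))
         \<longleftrightarrow> integrable M (\<lambda>\<omega>. zeta3_integrand j c (sample \<omega>))"
proof -
  have cs_K: "\<And>l. l < c \<Longrightarrow> cs ! l \<in> K"
    using cs nth_mem by blast
  have meas_K: "(\<lambda>x. zeta3_integrand j c (\<lambda>l. x (cs ! l))) \<in> borel_measurable (PN K)"
    and meas_c: "(\<lambda>x. zeta3_integrand j c (\<lambda>l. x (id l))) \<in> borel_measurable (PN {..<c})"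
    using assms cs_K by (intro zeta3_integrand_measurable; auto)+
  have inj: "inj_on id K" "id ` K \<subseteq> {..<n}"
    and inj_cs: "inj_on ((!) cs) {..<c}" "(!) cs ` {..<c} \<subseteq> {..<n}"
    and inj_c: "inj_on id {..<c}" "id ` {..<c} \<subseteq> {..<n}"
    using assms cs_K two_m_le_n by (auto simp: inj_on_def nth_eq_iff_index_eq)
  have e1: "zeta3_integrand j c (\<lambda>l. (\<lambda>l\<in>K. X (id l) \<omega>) (cs ! l))
      = zeta3_integrand j c (\<lambda>l. (\<lambda>l\<in>{..<c}. X (cs ! l) \<omega>) (id l))" for \<omega>
    using assms cs_K by (intro zeta3_integrand_cong) auto
  have e2: "zeta3_integrand j c (\<lambda>l. (\<lambda>l\<in>{..<c}. X (id l) \<omega>) (id l)) = zeta3_integrand j c (sample \<omega>)"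
    for \<omega>
    using assms by (intro zeta3_integrand_cong) auto
  note t1 = integral_sample_reindex[OF inj meas_K] integrable_sample_reindex[OF inj meas_K]
  note t2 = integral_sample_reindex[OF inj_cs meas_c] integrable_sample_reindex[OF inj_cs meas_c]
  note t3 = integral_sample_reindex[OF inj_c meas_c] integrable_sample_reindex[OF inj_c meas_c]
  show "(\<integral>x. zeta3_integrand j c (\<lambda>l. x (cs ! l)) \<partial>PD K) = (\<integral>\<omega>. zeta3_integrand j c (sample \<omega>) \<partial>M)"
    using t1(1) t2(1) t3(1) unfolding e1 e2 by simp
  show "integrable (PD K) (\<lambda>x. zeta3_integrand j c (\<lambda>l. x (cs ! l)))
      \<longleftrightarrow> integrable M (\<lambda>\<omega>. zeta3_integrand j c (sample \<omega>))"
    using t1(2) t2(2) t3(2) unfolding e1 e2 by simp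
qed

text \<open>The indices of \<open>T\<close> outside \<open>S1 \<union> S2\<close> are integrated out first, then those
  of \<open>S1\<close> and of \<open>S2\<close> outside \<open>T\<close>; what remains depends only on the indices that
  \<open>T\<close> shares with \<open>S1\<close> or \<open>S2\<close>.\<close>

lemma
  assumes S1: "S1 \<in> dtuples n m" and S2: "S2 \<in> dtuples n m" and T: "T \<in> dtuples n m"
    and disj: "set S1 \<inter> set S2 = {}"
  defines "K1 \<equiv> set S1 \<union> set S2"
  shows integrable_triple_integrate_out_T:
      "integrable (PD K1) (\<lambda>x. partial_mean K1 (set T - K1) T x * (centered S1 x * centered S2 x))"
    and triple_moment_integrate_out_T:
      "(\<integral>\<omega>. centered S1 (sample \<omega>) * centered S2 (sample \<omega>) * centered T (sample \<omega>) \<partial>M)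
         = (\<integral>x. partial_mean K1 (set T - K1) T x * (centered S1 x * centered S2 x) \<partial>PD K1)"
proof -
  define I where "I = K1 \<union> (set T - K1)"
  define \<Phi> where "\<Phi> = (\<lambda>z. centered T z * (centered S1 z * centered S2 z))"
  have len: "length S1 = m" "length S2 = m" "length T = m"
    using S1 S2 T by (simp_all add: dtuples_def)
  have sub: "I \<subseteq> {..<n}"
    using S1 S2 T by (auto simp: I_def K1_def dtuples_def)
  have "\<And>l. l < m \<Longrightarrow> S1 ! l \<in> I" "\<And>l. l < m \<Longrightarrow> S2 ! l \<in> I" "\<And>l. l < m \<Longrightarrow> T ! l \<in> I"
    using len by (auto simp: I_def K1_def)
  then have "\<Phi> \<in> borel_measurable (PN I)"
    unfolding \<Phi>_def by (intro borel_measurable_times centered_measurable)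
  moreover have "depends_only_on I \<Phi>"
    unfolding \<Phi>_def using len by (intro depends_only_on_mult depends_only_on_centered) (auto simp: I_def K1_def)
  moreover have "integrable M (\<lambda>\<omega>. \<Phi> (sample \<omega>))"
    using integrable_centered_triple[OF S1 S2 T disj] by (simp add: \<Phi>_def ac_simps)
  ultimately have int: "integrable (PD (K1 \<union> (set T - K1))) \<Phi>"
    and eq: "(\<integral>\<omega>. \<Phi> (sample \<omega>) \<partial>M) = integral\<^sup>L (PD (K1 \<union> (set T - K1))) \<Phi>"
    using integral_sample_eq_PD[OF sub] integrable_sample_iff_PD[OF sub] by (simp_all add: I_def)
  have KQ: "finite K1" "finite (set T - K1)" "K1 \<inter> (set T - K1) = {}"
    by (auto simp: K1_def)
  have "depends_only_on K1 (\<lambda>z. centered S1 z * centered S2 z)"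
    using len by (intro depends_only_on_mult depends_only_on_centered) (auto simp: K1_def)
  note step = integrable_integrate_out[OF KQ this int[unfolded \<Phi>_def]]
    integral_integrate_out[OF KQ this int[unfolded \<Phi>_def]]
  show "integrable (PD K1) (\<lambda>x. partial_mean K1 (set T - K1) T x * (centered S1 x * centered S2 x))"
    by (rule step(1))
  have "(\<integral>\<omega>. centered S1 (sample \<omega>) * centered S2 (sample \<omega>) * centered T (sample \<omega>) \<partial>M)
      = (\<integral>\<omega>. \<Phi> (sample \<omega>) \<partial>M)"
    by (simp add: \<Phi>_def ac_simps)
  also note eq
  finally show "(\<integral>\<omega>. centered S1 (sample \<omega>) * centered S2 (sample \<omega>) * centered T (sample \<omega>) \<partial>M)
      = (\<integral>x. partial_mean K1 (set T - K1) T x * (centered S1 x * centered S2 x) \<partial>PD K1)"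
    unfolding \<Phi>_def step(2) .
qed

lemma
  assumes S1: "S1 \<in> dtuples n m" and S2: "S2 \<in> dtuples n m" and T: "T \<in> dtuples n m"
    and disj: "set S1 \<inter> set S2 = {}"
  defines "K \<equiv> set T \<inter> (set S1 \<union> set S2)"
  defines "\<Phi> \<equiv> \<lambda>x. partial_mean K (set S2 - set T) S2 x
                    * (partial_mean K (set S1 - set T) S1 x * partial_mean K (set T - K) T x)"
  shows integrable_triple_partial_means: "integrable (PD K) \<Phi>"
    and triple_moment_eq_integral_partial_means:
      "(\<integral>\<omega>. centered S1 (sample \<omega>) * centered S2 (sample \<omega>) * centered T (sample \<omega>) \<partial>M)
         = integral\<^sup>L (PD K) \<Phi>"
proof -
  define K1 where "K1 = set S1 \<union> set S2"
  define K2 where "K2 = (set T \<inter> set S1) \<union> set S2"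
  define P1 where "P1 = partial_mean K1 (set T - K1) T"
  define P2 where "P2 = partial_mean K2 (set S1 - set T) S1"
  have len: "length S1 = m" "length S2 = m" "length T = m"
    using S1 S2 T by (simp_all add: dtuples_def)
  note step1 = integrable_triple_integrate_out_T[OF S1 S2 T disj, folded K1_def P1_def]
    triple_moment_integrate_out_T[OF S1 S2 T disj, folded K1_def P1_def]
  have KQ2: "finite K2" "finite (set S1 - set T)" "K2 \<inter> (set S1 - set T) = {}" "K2 \<union> (set S1 - set T) = K1"
    using disj by (auto simp: K1_def K2_def)
  have dep2: "depends_only_on K2 (\<lambda>x. P1 x * centered S2 x)"
  proof (intro depends_only_on_mult)
    show "depends_only_on K2 P1"
      unfolding P1_def using depends_only_on_partial_mean[OF len(3), of K1 "set T - K1"]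
      by (rule depends_only_on_mono[rotated]) (auto simp: K1_def K2_def)
    show "depends_only_on K2 (centered S2)"
      using len(2) by (rule depends_only_on_centered) (auto simp: K2_def)
  qed
  have "integrable (PD (K2 \<union> (set S1 - set T))) (\<lambda>z. centered S1 z * (P1 z * centered S2 z))"
    using step1(1) KQ2(4) by (simp add: P1_def ac_simps)
  note step2 = integrable_integrate_out[OF KQ2(1-3) dep2 this] integral_integrate_out[OF KQ2(1-3) dep2 this]
  have KQ3: "finite K" "finite (set S2 - set T)" "K \<inter> (set S2 - set T) = {}" "K \<union> (set S2 - set T) = K2"
    using disj by (auto simp: K_def K2_def)
  have dep3: "depends_only_on K (\<lambda>x. P2 x * P1 x)"
  proof (intro depends_only_on_mult)
    show "depends_only_on K P2"
      unfolding P2_def using depends_only_on_partial_mean[OF len(1) KQ2(3)]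
      by (rule depends_only_on_mono[rotated]) (use disj in \<open>auto simp: K_def K2_def\<close>)
    show "depends_only_on K P1"
      unfolding P1_def using depends_only_on_partial_mean[OF len(3), of K1 "set T - K1"]
      by (rule depends_only_on_mono[rotated]) (auto simp: K_def K1_def)
  qed
  have "integrable (PD (K \<union> (set S2 - set T))) (\<lambda>z. centered S2 z * (P2 z * P1 z))"
    using step2(1) KQ3(4) by (simp add: P2_def ac_simps)
  note step3 = integrable_integrate_out[OF KQ3(1-3) dep3 this] integral_integrate_out[OF KQ3(1-3) dep3 this]
  have Q1: "set T - K1 = set T - K"
    by (auto simp: K_def K1_def)
  have "P1 = partial_mean K (set T - K) T"
    unfolding P1_def Q1 by (intro ext partial_mean_cong[OF len(3)]) (auto simp: K_def K1_def)
  moreover have "P2 = partial_mean K (set S1 - set T) S1"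
    unfolding P2_def using disj by (intro ext partial_mean_cong[OF len(1)]) (auto simp: K_def K2_def)
  ultimately have \<Phi>_eq: "\<Phi> = (\<lambda>x. partial_mean K (set S2 - set T) S2 x * (P2 x * P1 x))"
    by (simp add: \<Phi>_def)
  show "integrable (PD K) \<Phi>"
    using step3(1) by (simp add: \<Phi>_eq)
  show "(\<integral>\<omega>. centered S1 (sample \<omega>) * centered S2 (sample \<omega>) * centered T (sample \<omega>) \<partial>M)
      = integral\<^sup>L (PD K) \<Phi>"
    using step1(2) step2(2) step3(2) KQ2(4) KQ3(4) by (simp add: \<Phi>_eq P1_def P2_def ac_simps)
qed

lemma triple_partial_means_AE_eq_zeta3_integrand:
  assumes S1: "S1 \<in> dtuples n m" and S2: "S2 \<in> dtuples n m" and T: "T \<in> dtuples n m"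
    and disj: "set S1 \<inter> set S2 = {}"
  defines "K \<equiv> set T \<inter> (set S1 \<union> set S2)"
  assumes as: "distinct as" "set as = set S1 \<inter> K" and bs: "distinct bs" "set bs = set S2 \<inter> K"
  shows "AE x in PD K. partial_mean K (set S2 - set T) S2 x
             * (partial_mean K (set S1 - set T) S1 x * partial_mean K (set T - K) T x)
           = zeta3_integrand (length as) (length (as @ bs)) (\<lambda>l. x ((as @ bs) ! l))"
proof -
  have K: "finite K" "K \<subseteq> {..<n}"
    using T by (auto simp: K_def dtuples_def)
  have Q: "set S1 - set T = set S1 - K" "set S2 - set T = set S2 - K"
    using disj by (auto simp: K_def)
  have cs: "distinct (as @ bs)" "set (as @ bs) = set T \<inter> K"
    using as bs disj by (auto simp: K_def)
  from partial_mean_AE_eq_htil[OF S2 K Q(2) bs] partial_mean_AE_eq_htil[OF S1 K Q(1) as]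
    partial_mean_AE_eq_htil[OF T K refl cs]
  show ?thesis
  proof eventually_elim
    case (elim x)
    have "htil m D h \<theta> (length as) (\<lambda>l. x (as ! l))
        = htil m D h \<theta> (length as) (\<lambda>l. x ((as @ bs) ! l))"
      by (rule htil_cong) (simp add: nth_append)
    moreover have "htil m D h \<theta> (length bs) (\<lambda>l. x (bs ! l))
        = htil m D h \<theta> (length bs) (\<lambda>l. x ((as @ bs) ! (length as + l)))"
      by (rule htil_cong) (simp add: nth_append)
    ultimately show ?case
      using elim by (simp add: zeta3_integrand_def)
  qed
qed

lemma triple_moment_eq_zeta3:
  assumes S1: "S1 \<in> dtuples n m" and S2: "S2 \<in> dtuples n m" and T: "T \<in> dtuples n m"
    and disj: "set S1 \<inter> set S2 = {}"
  shows "(\<integral>\<omega>. centered S1 (sample \<omega>) * centered S2 (sample \<omega>) * centered T (sample \<omega>) \<partial>M)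
       = zeta3 M m D h \<theta> X (card (set T \<inter> set S1) + card (set T \<inter> set S2)) (card (set T \<inter> set S1))"
proof -
  define K where "K = set T \<inter> (set S1 \<union> set S2)"
  define as where "as = filter (\<lambda>l. l \<in> set S1) T"
  define bs where "bs = filter (\<lambda>l. l \<in> set S2) T"
  define cs where "cs = as @ bs"
  define j where "j = length as"
  define c where "c = length cs"
  define \<Psi> where "\<Psi> = (\<lambda>x. zeta3_integrand j c (\<lambda>l. x (cs ! l)))"
  have T': "distinct T" "length T = m"
    using T by (simp_all add: dtuples_def)
  have K: "K \<subseteq> {..<n}"
    using T by (auto simp: K_def dtuples_def)
  have as: "distinct as" "set as = set S1 \<inter> K" and bs: "distinct bs" "set bs = set S2 \<inter> K"
    and cs: "distinct cs" "set cs \<subseteq> K"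
    using T' disj by (auto simp: as_def bs_def cs_def K_def)
  have "card (set as) = card (set T \<inter> set S1)" "card (set bs) = card (set T \<inter> set S2)"
    by (auto simp: as_def bs_def intro: arg_cong[where f=card])
  then have j_eq: "j = card (set T \<inter> set S1)" and c_eq: "c = card (set T \<inter> set S1) + card (set T \<inter> set S2)"
    using as(1) bs(1) by (simp_all add: j_def c_def cs_def distinct_card)
  have "c = card (set cs)"
    using cs(1) by (simp add: c_def distinct_card)
  also have "\<dots> \<le> card (set T)"
    using cs(2) by (intro card_mono) (auto simp: K_def)
  finally have "j \<le> c" "c \<le> m"
    using T' by (simp_all add: j_def c_def cs_def distinct_card)
  note reindex = integral_zeta3_integrand_reindex[OF cs c_def[symmetric] this K]
    integrable_zeta3_integrand_reindex[OF cs c_def[symmetric] this K]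
  have "\<Psi> \<in> borel_measurable (PD K)"
    unfolding \<Psi>_def measurable_PD using \<open>j \<le> c\<close> \<open>c \<le> m\<close> cs nth_mem[of _ cs]
    by (intro zeta3_integrand_measurable) (auto simp: c_def)
  with triple_partial_means_AE_eq_zeta3_integrand[OF S1 S2 T disj as[unfolded K_def] bs[unfolded K_def]]
  have int_\<Psi>: "integrable (PD K) \<Psi>"
    and moment: "(\<integral>\<omega>. centered S1 (sample \<omega>) * centered S2 (sample \<omega>) * centered T (sample \<omega>) \<partial>M)
      = integral\<^sup>L (PD K) \<Psi>"
    using integrable_triple_partial_means[OF S1 S2 T disj] triple_moment_eq_integral_partial_means[OF S1 S2 T disj]
    unfolding K_def[symmetric] \<Psi>_def j_def c_def cs_def
    by (auto intro: integrable_cong_AE_imp integral_cong_AE)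
  have "integrable M (\<lambda>\<omega>. zeta3_integrand j c (sample \<omega>))"
    using reindex(2) int_\<Psi> by (simp add: \<Psi>_def)
  from zeta3_eq_integral[OF \<open>c \<le> m\<close> this] moment reindex(1)
  have "(\<integral>\<omega>. centered S1 (sample \<omega>) * centered S2 (sample \<omega>) * centered T (sample \<omega>) \<partial>M)
      = zeta3 M m D h \<theta> X c j"
    by (simp add: \<Psi>_def)
  then show ?thesis
    by (simp only: j_eq c_eq)
qed

subsection \<open>The variance decomposition\<close>

lemma L1_eq_average:
  "theta2_hat m h n X \<omega> - \<theta>\<^sup>2 - 2 * \<theta> * (theta_hat m h n X \<omega> - \<theta>)
     = (\<Sum>js\<in>dtuples n (2*m). centered (take m js) (sample \<omega>) * centered (drop m js) (sample \<omega>))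
         / real (ffall n (2*m))"
  using theta2_hat_linearization[OF two_m_le_n] by (simp add: centered_def)

lemma theta_hat_deviation_eq_average:
  "theta_hat m h n X \<omega> - \<theta> = (\<Sum>ks\<in>dtuples n m. centered ks (sample \<omega>)) / real (ffall n m)"
proof -
  have "m \<le> n"
    using two_m_le_n by simp
  then show ?thesis
    using theta_hat_minus_eq_average by (simp add: centered_def)
qed

lemma expectation_L1_mult_theta_hat_deviation:
  "4 * (\<integral>\<omega>. (theta2_hat m h n X \<omega> - \<theta>\<^sup>2 - 2 * \<theta> * (theta_hat m h n X \<omega> - \<theta>))
            * (theta_hat m h n X \<omega> - \<theta>) \<partial>M)
     = Xi3 M m D h \<theta> X n"
proof -
  define G where "G js \<omega> = centered (take m js) (sample \<omega>) * centered (drop m js) (sample \<omega>)" for js \<omega>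
  define g where "g ks \<omega> = centered ks (sample \<omega>)" for ks \<omega>
  have tuples: "take m js \<in> dtuples n m" "drop m js \<in> dtuples n m" "set (take m js) \<inter> set (drop m js) = {}"
    if "js \<in> dtuples n (2*m)" for js
    using dtuples_take_drop[of js n m m] that by (simp_all add: mult_2)
  have int: "integrable M (\<lambda>\<omega>. G js \<omega> * g ks \<omega>)" if "js \<in> dtuples n (2*m)" "ks \<in> dtuples n m" for js ks
    using integrable_centered_triple[OF tuples(1,2)[OF that(1)] that(2) tuples(3)[OF that(1)]]
    by (simp add: G_def g_def)
  have "(\<integral>\<omega>. (theta2_hat m h n X \<omega> - \<theta>\<^sup>2 - 2 * \<theta> * (theta_hat m h n X \<omega> - \<theta>))
            * (theta_hat m h n X \<omega> - \<theta>) \<partial>M)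
      = (\<integral>\<omega>. (\<Sum>js\<in>dtuples n (2*m). \<Sum>ks\<in>dtuples n m. G js \<omega> * g ks \<omega>) \<partial>M)
          / (real (ffall n (2*m)) * real (ffall n m))"
    by (subst L1_eq_average, subst theta_hat_deviation_eq_average) (simp add: G_def g_def sum_product)
  also have "\<dots> = (\<Sum>js\<in>dtuples n (2*m). \<Sum>ks\<in>dtuples n m. \<integral>\<omega>. G js \<omega> * g ks \<omega> \<partial>M)
          / (real (ffall n (2*m)) * real (ffall n m))"
    using int by (simp add: Bochner_Integration.integral_sum integrable_sum)
  also have "\<dots> = (\<Sum>js\<in>dtuples n (2*m). \<Sum>ks\<in>dtuples n m.
        zeta3 M m D h \<theta> X (card (set ks \<inter> set (take m js)) + card (set ks \<inter> set (drop m js)))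
          (card (set ks \<inter> set (take m js))))
          / (real (ffall n (2*m)) * real (ffall n m))"
    using triple_moment_eq_zeta3 tuples by (simp add: G_def g_def)
  also have "\<dots> = Xi3 M m D h \<theta> X n / 4"
    unfolding Xi3_def using average_over_intersection_patterns[OF two_m_le_n, of "zeta3 M m D h \<theta> X"]
    by (simp add: zeta3_0)
  finally show ?thesis by simp
qed

lemma square_integrable_L1:
  "square_integrable M (\<lambda>\<omega>. theta2_hat m h n X \<omega> - \<theta>\<^sup>2 - 2 * \<theta> * (theta_hat m h n X \<omega> - \<theta>))"
proof -
  have "square_integrable M (\<lambda>\<omega>. \<Sum>js\<in>dtuples n (2*m).
      centered (take m js) (sample \<omega>) * centered (drop m js) (sample \<omega>))"
    using dtuples_take_drop[of _ n m m]
    by (intro square_integrable_sum finite_dtuples square_integrable_centered_product) (auto simp: mult_2)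
  from square_integrable_cmult[OF this, of "1 / real (ffall n (2*m))"] show ?thesis
    by (simp add: L1_eq_average)
qed

lemma square_integrable_theta_hat_deviation: "square_integrable M (\<lambda>\<omega>. theta_hat m h n X \<omega> - \<theta>)"
proof -
  have "square_integrable M (\<lambda>\<omega>. \<Sum>ks\<in>dtuples n m. centered ks (sample \<omega>))"
    by (intro square_integrable_sum finite_dtuples square_integrable_centered)
  from square_integrable_cmult[OF this, of "1 / real (ffall n m)"] show ?thesis
    by (simp add: theta_hat_deviation_eq_average)
qed

lemma expectation_theta_hat_deviation: "(\<integral>\<omega>. theta_hat m h n X \<omega> - \<theta> \<partial>M) = 0"
proof -
  have "(\<integral>\<omega>. theta_hat m h n X \<omega> - \<theta> \<partial>M)
      = (\<Sum>ks\<in>dtuples n m. \<integral>\<omega>. centered ks (sample \<omega>) \<partial>M) / real (ffall n m)"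
    using square_integrable_centered[THEN square_integrable_integrable]
    by (simp add: theta_hat_deviation_eq_average Bochner_Integration.integral_sum)
  then show ?thesis
    by (simp add: integral_centered)
qed

lemma variance_two_theta_hat:
  "variance (\<lambda>\<omega>. 2 * theta_hat m h n X \<omega>) = 4 * (\<integral>\<omega>. (theta_hat m h n X \<omega> - \<theta>)\<^sup>2 \<partial>M)"
proof -
  have "integrable M (\<lambda>\<omega>. (theta_hat m h n X \<omega> - \<theta>) + \<theta>)"
    using square_integrable_integrable[OF square_integrable_theta_hat_deviation] by (rule Bochner_Integration.integrable_add) simp
  then have "integrable M (theta_hat m h n X)"
    by simp
  then have "expectation (\<lambda>\<omega>. 2 * theta_hat m h n X \<omega>) = 2 * \<theta>"
    using expectation_theta_hat_deviation prob_space by simp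
  then have "(\<lambda>\<omega>. (2 * theta_hat m h n X \<omega> - expectation (\<lambda>\<omega>. 2 * theta_hat m h n X \<omega>))\<^sup>2)
      = (\<lambda>\<omega>. 4 * (theta_hat m h n X \<omega> - \<theta>)\<^sup>2)"
    by (simp add: fun_eq_iff power2_eq_square algebra_simps)
  then show ?thesis
    by simp
qed

theorem variance_L_decomposition:
  fixes \<theta>bar :: real
  shows "variance (\<lambda>\<omega>. theta2_hat m h n X \<omega> - \<theta>\<^sup>2 - 2 * \<theta>bar * (theta_hat m h n X \<omega> - \<theta>))
     = variance (\<lambda>\<omega>. theta2_hat m h n X \<omega> - \<theta>\<^sup>2 - 2 * \<theta> * (theta_hat m h n X \<omega> - \<theta>))
       + (\<theta> - \<theta>bar)\<^sup>2 * variance (\<lambda>\<omega>. 2 * theta_hat m h n X \<omega>)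
       + (\<theta> - \<theta>bar) * Xi3 M m D h \<theta> X n"
proof -
  define L1 where "L1 = (\<lambda>\<omega>. theta2_hat m h n X \<omega> - \<theta>\<^sup>2 - 2 * \<theta> * (theta_hat m h n X \<omega> - \<theta>))"
  define V where "V = (\<lambda>\<omega>. theta_hat m h n X \<omega> - \<theta>)"
  have "theta2_hat m h n X \<omega> - \<theta>\<^sup>2 - 2 * \<theta>bar * (theta_hat m h n X \<omega> - \<theta>)
      = L1 \<omega> + 2 * (\<theta> - \<theta>bar) * V \<omega>" for \<omega>
    by (simp add: L1_def V_def algebra_simps)
  then have "variance (\<lambda>\<omega>. theta2_hat m h n X \<omega> - \<theta>\<^sup>2 - 2 * \<theta>bar * (theta_hat m h n X \<omega> - \<theta>))
      = variance (\<lambda>\<omega>. L1 \<omega> + 2 * (\<theta> - \<theta>bar) * V \<omega>)"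
    by (simp only:)
  also have "\<dots> = variance L1 + (2 * (\<theta> - \<theta>bar))\<^sup>2 * expectation (\<lambda>\<omega>. (V \<omega>)\<^sup>2)
        + 2 * (2 * (\<theta> - \<theta>bar)) * expectation (\<lambda>\<omega>. L1 \<omega> * V \<omega>)"
    using square_integrable_L1 square_integrable_theta_hat_deviation expectation_theta_hat_deviation
    unfolding L1_def V_def by (rule variance_add_scaled_centered)
  also have "\<dots> = variance L1 + (\<theta> - \<theta>bar)\<^sup>2 * (4 * expectation (\<lambda>\<omega>. (V \<omega>)\<^sup>2))
        + (\<theta> - \<theta>bar) * (4 * expectation (\<lambda>\<omega>. L1 \<omega> * V \<omega>))"
    by (simp add: power2_eq_square algebra_simps)
  finally show ?thesis
    using variance_two_theta_hat expectation_L1_mult_theta_hat_deviation by (simp add: L1_def V_def)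
qed

end

theorem lemma3:
  fixes M :: "'a measure" and N :: "'e measure"
    and X :: "nat \<Rightarrow> nat \<Rightarrow> 'a \<Rightarrow> 'e"
    and h :: "(nat \<Rightarrow> 'e) \<Rightarrow> real"
    and m k i :: nat and n :: "nat \<Rightarrow> nat"
    and \<theta> :: "nat \<Rightarrow> real" and \<theta>bar :: real
  assumes "prob_space M"
    and "1 \<le> m"
    and "i < k"
    and "\<forall>i'<k. 2 * m \<le> n i'"
    and "h \<in> borel_measurable (PiM {..<m} (\<lambda>_. N))"
    and "symmetric_kernel m N h"
    and "prob_space.indep_vars M (\<lambda>_. N) (\<lambda>(i', j). X i' j) {(i', j). i' < k \<and> j < n i'}"
    and "\<forall>i'<k. \<forall>j<n i'. distr M N (X i' j) = distr M N (X i' 0)"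
    and "\<forall>i'<k. integrable M (\<lambda>\<omega>. (happ m h (\<lambda>l. X i' l \<omega>))\<^sup>2)"
    and "\<And>i'. \<theta> i' = (\<integral>\<omega>. happ m h (\<lambda>l. X i' l \<omega>) \<partial>M)"
    and "\<theta>bar = (\<Sum>i'<k. \<theta> i') / real k"
  shows "prob_space.variance M
           (\<lambda>\<omega>. theta2_hat m h (n i) (X i) \<omega> - (\<theta> i)\<^sup>2
                  - 2 * \<theta>bar * (theta_hat m h (n i) (X i) \<omega> - \<theta> i))
       = prob_space.variance M
           (\<lambda>\<omega>. theta2_hat m h (n i) (X i) \<omega> - (\<theta> i)\<^sup>2
                  - 2 * \<theta> i * (theta_hat m h (n i) (X i) \<omega> - \<theta> i))
         + (\<theta> i - \<theta>bar)\<^sup>2 * prob_space.variance M (\<lambda>\<omega>. 2 * theta_hat m h (n i) (X i) \<omega>)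
         + (\<theta> i - \<theta>bar) * Xi3 M m (distr M N (X i 0)) h (\<theta> i) (X i) (n i)"
proof -
  \<comment> \<open>The identity holds for every \<open>\<theta>bar\<close>.\<close>
  interpret prob_space M by fact
  have "indep_vars (\<lambda>_. N) (X i) {..<n i}"
    using indep_vars_reindex[OF assms(7), of "\<lambda>l. (i, l)" "{..<n i}"] assms(3)
    by (simp add: inj_on_def image_subset_iff)
  then have "iid_sample M N (X i) h m (n i) (\<theta> i)"
    using assms(1-6,8-10) by (intro iid_sample.intro iid_sample_axioms.intro) blast+
  then interpret iid_sample M N "X i" h m "n i" "\<theta> i" .
  show ?thesis
    by (rule variance_L_decomposition)
qed

end
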